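(* Let $\mathbf b=(b_1,b_2)\in\mathbb N^2$ with $\gcd(b_1,b_2)=1$ and $b_1\le b_2$, let $r\ge1$ and $\boldsymbol\alpha=(\alpha_1,\dots,\alpha_r)\in(0,1)^r$. With $\overline R(n)$ as below, for every $\varepsilon>0$, $$\mathbb V\big(\overline R(n)\big)=O\big(n^{-1/2+\varepsilon}\big),$$ the implied constant depending on $\boldsymbol\alpha,\mathbf b,r,\varepsilon$.
   Context: $\mathbf b$-visibility: given two distinct lattice points $P=(p_1,p_2)$, $Q=(q_1,q_2)\in\mathbb Z^2$, they determine a curve through both of the form $a_1(y-q_2)^{b_1}=a_2(x-q_1)^{b_2}$ for some $(a_1,a_2)\in\mathbb Q^2\setminus\{(0,0)\}$; $P$ is $\mathbf b$-visible from $Q$ if no other lattice point lies on the segment of this curve between $P$ and $Q$; a point $P\ne(0,0)$ is $\mathbf b$-visible if it is $\mathbf b$-visible from the origin. For $1\le j\le r$, $(P^{(j)}_i)_{i\ge0}$ is an $\alpha_j$-random walk ($P^{(j)}_0=(0,0)$, $P^{(j)}_{i+1}=P^{(j)}_i+(1,0)$ with probability $\alpha_j$ and $+(0,1)$ with probability $1-\alpha_j$, independently), the $r$ walks being mutually independent. $Y_i=1$ if all $P^{(j)}_i$, $1\le j\le r$, are $\mathbf b$-visible, $Y_i=0$ otherwise; $\overline R(n)=\frac1n\sum_{i=1}^nY_i$. *)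

theory Defs
  imports "HOL-Probability.Probability" "HOL-Library.Landau_Symbols"
begin

definition on_b_curve :: "nat \<times> nat \<Rightarrow> rat \<times> rat \<Rightarrow> int \<times> int \<Rightarrow> bool" where
  "on_b_curve b a X \<longleftrightarrow>
     fst a * of_int (snd X) ^ fst b = snd a * of_int (fst X) ^ snd b"

definition betw :: "int \<Rightarrow> int \<Rightarrow> int \<Rightarrow> bool" where
  "betw u v x \<longleftrightarrow> min u v \<le> x \<and> x \<le> max u v"

definition b_visible :: "nat \<times> nat \<Rightarrow> int \<times> int \<Rightarrow> bool" where
  "b_visible b P \<longleftrightarrow> P \<noteq> (0,0) \<and>
     (\<forall>a::rat \<times> rat. a \<noteq> (0,0) \<and> on_b_curve b a P \<longrightarrow>
        (\<forall>X::int \<times> int. on_b_curve b a X \<and> betw 0 (fst P) (fst X) \<and> betw 0 (snd P) (snd X)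
            \<longrightarrow> X = (0,0) \<or> X = P))"

text \<open>Probability space of the steps: omega (j,i) = True means the i-th step
  (i = 0,1,...) of walk j is (1,0), which has probability alpha j; otherwise (0,1).
  All steps are independent.\<close>
definition walk_space :: "nat \<Rightarrow> (nat \<Rightarrow> real) \<Rightarrow> (nat \<times> nat \<Rightarrow> bool) measure" where
  "walk_space r \<alpha> = (\<Pi>\<^sub>M ji\<in>{1..r} \<times> UNIV. measure_pmf (bernoulli_pmf (\<alpha> (fst ji))))"

definition walk_pos :: "(nat \<times> nat \<Rightarrow> bool) \<Rightarrow> nat \<Rightarrow> nat \<Rightarrow> int \<times> int" where
  "walk_pos \<omega> j i =
     (int (card {k. k < i \<and> \<omega> (j,k)}), int (card {k. k < i \<and> \<not> \<omega> (j,k)}))"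

definition Y_ind :: "nat \<times> nat \<Rightarrow> nat \<Rightarrow> nat \<Rightarrow> (nat \<times> nat \<Rightarrow> bool) \<Rightarrow> real" where
  "Y_ind b r i \<omega> = (if \<forall>j\<in>{1..r}. b_visible b (walk_pos \<omega> j i) then 1 else 0)"

definition Rbar :: "nat \<times> nat \<Rightarrow> nat \<Rightarrow> nat \<Rightarrow> (nat \<times> nat \<Rightarrow> bool) \<Rightarrow> real" where
  "Rbar b r n \<omega> = (1 / real n) * (\<Sum>i=1..n. Y_ind b r i \<omega>)"

end

(* Fix 1 \<le> i < k \<le> n.  Since the walks are independent, Cov(Y_i, Y_k) is controlled walk by
   walk.  A lattice point (x, y) with x, y \<ge> 1 is b-visible iff no prime q has q^b1 dvd x and
   q^b2 dvd y; on the antidiagonal x + y = k such primes divide k (as b1 \<le> b2), so by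
   inclusion-exclusion over the set S of primes with q^b1 dvd k, visibility at time k is a signed
   combination of 2^|S| congruence conditions on the number of up-steps.  Between times i and k
   this number gains a binomial increment, whose weights have total variation O((k-i)^(-1/2));
   hence each congruence modulo D holds with probability 1/D + O((k-i)^(-1/2)) whatever happened
   before time i.  Thus Cov(Y_i, Y_k) = O(2^|S| (k-i)^(-1/2)) = O(n^eps (k-i)^(-1/2)), and
   summing over i < k \<le> n gives Var(R(n)) = O(n^(-1/2+eps)). *)

theory Submission
  imports Defs "HOL-Computational_Algebra.Primes"
begin

text \<open>At a prime \<open>p\<close> where \<open>x'\<close> is less divisible than \<open>x\<close>, comparing \<open>p\<close>-adic valuations
  in the curve equation and using \<open>coprime b1 b2\<close> forces \<open>p^b1 dvd x\<close> and \<open>p^b2 dvd y\<close>.\<close>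

lemma b_curve_points_between_trivial:
  fixes b1 b2 x y x' y' :: nat
  assumes b1: "b1 \<ge> 1" and b2: "b2 \<ge> 1" and g: "coprime b1 b2"
    and xy: "x \<ge> 1" "y \<ge> 1" and le: "x' \<le> x" "y' \<le> y"
    and eq: "y' ^ b1 * x ^ b2 = x' ^ b2 * y ^ b1"
    and no_prime: "\<not> (\<exists>q. prime q \<and> q ^ b1 dvd x \<and> q ^ b2 dvd y)"
  shows "(x' = 0 \<and> y' = 0) \<or> (x' = x \<and> y' = y)"
proof (cases "x' = 0")
  case True
  then have "y' ^ b1 * x ^ b2 = 0" using eq b2 by simp
  then have "y' = 0" using xy b1 by simp
  then show ?thesis using True by simp
next
  case False
  have "y' \<noteq> 0"
  proof
    assume "y' = 0"
    then have "x' ^ b2 * y ^ b1 = 0" using eq b1 by (cases b1) auto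
    then show False using False xy by simp
  qed
  show ?thesis
  proof (cases "\<forall>p. prime p \<longrightarrow> multiplicity p x \<le> multiplicity p x'")
    case True
    then have "x dvd x'" using xy by (intro multiplicity_le_imp_dvd) auto
    then have "x \<le> x'" using False by (simp add: dvd_imp_le)
    then have "x' = x" using le by simp
    then have "y' ^ b1 = y ^ b1" using eq xy by simp
    then have "y' = y" using b1 by (simp add: power_eq_iff_eq_base)
    then show ?thesis using \<open>x' = x\<close> by simp
  next
    case False
    then obtain p where p: "prime p" "multiplicity p x' < multiplicity p x" by auto
    define e where "e = multiplicity p x - multiplicity p x'"
    have "multiplicity p (y' ^ b1 * x ^ b2) = multiplicity p (x' ^ b2 * y ^ b1)" using eq by simp
    then have "b1 * multiplicity p y' + b2 * multiplicity p x = b2 * multiplicity p x' + b1 * multiplicity p y"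
      using p(1) \<open>x' \<noteq> 0\<close> \<open>y' \<noteq> 0\<close> xy
      by (simp add: prime_elem_multiplicity_mult_distrib prime_elem_multiplicity_power_distrib)
    then have "b1 * multiplicity p y = b1 * multiplicity p y' + b2 * e"
      using p(2) by (simp add: e_def diff_mult_distrib2)
    then have f: "b1 * (multiplicity p y - multiplicity p y') = b2 * e"
      by (simp add: diff_mult_distrib2)
    then have "b1 dvd e" using g by (metis dvd_triv_left coprime_dvd_mult_right_iff)
    then have "b1 \<le> e" using p(2) by (simp add: dvd_imp_le e_def)
    then have "b1 * b2 \<le> b1 * (multiplicity p y - multiplicity p y')"
      using f by (metis mult.commute mult_le_mono2)
    then have "b2 \<le> multiplicity p y" using b1 by simp
    moreover have "b1 \<le> multiplicity p x" using \<open>b1 \<le> e\<close> by (simp add: e_def)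
    ultimately have "p ^ b1 dvd x" "p ^ b2 dvd y" by (auto intro: multiplicity_dvd')
    then show ?thesis using no_prime p(1) by blast
  qed
qed

text \<open>The point \<open>(x / q^b1, y / q^b2)\<close> lies strictly between the origin and \<open>(x, y)\<close>
  on their common curve \<open>y^b1 * X^b2 = x^b2 * Y^b1\<close>.\<close>

lemma not_b_visible_if_prime_power_divisor:
  fixes b1 b2 x y q :: nat
  assumes b1: "b1 \<ge> 1" and x: "x \<ge> 1" and q: "prime q" and dvd: "q ^ b1 dvd x" "q ^ b2 dvd y"
  shows "\<not> b_visible (b1, b2) (int x, int y)"
proof
  assume vis: "b_visible (b1, b2) (int x, int y)"
  obtain u v where u: "x = q ^ b1 * u" and v: "y = q ^ b2 * v" using dvd by (auto elim!: dvdE)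
  have "q ^ 1 \<le> q ^ b1" using q b1 prime_gt_0_nat[OF q] by (intro power_increasing) auto
  then have "2 * u \<le> q ^ b1 * u" using prime_ge_2_nat[OF q] by (intro mult_le_mono1) simp
  moreover have "u \<ge> 1" using u x by (cases u) auto
  ultimately have "u < x" using u by linarith
  have "v \<le> y" unfolding v using prime_gt_0_nat[OF q] by simp
  have "x ^ b2 = q ^ (b1 * b2) * u ^ b2" unfolding u by (simp add: power_mult_distrib power_mult)
  moreover have "y ^ b1 = q ^ (b1 * b2) * v ^ b1"
    unfolding v by (simp add: power_mult_distrib power_mult[symmetric] mult.commute)
  ultimately have "x ^ b2 * v ^ b1 = y ^ b1 * u ^ b2" by simp
  define a :: "rat \<times> rat" where "a = (of_nat x ^ b2, of_nat y ^ b1)"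
  have "on_b_curve (b1, b2) a (int u, int v)"
    unfolding on_b_curve_def a_def using arg_cong[OF \<open>x ^ b2 * v ^ b1 = y ^ b1 * u ^ b2\<close>,
      of "of_nat :: nat \<Rightarrow> rat"] by simp
  moreover have "a \<noteq> (0, 0)" "on_b_curve (b1, b2) a (int x, int y)"
    using x by (simp_all add: a_def on_b_curve_def)
  moreover have "betw 0 (int x) (int u)" "betw 0 (int y) (int v)"
    using \<open>u < x\<close> \<open>v \<le> y\<close> by (auto simp: betw_def)
  ultimately have "(int u, int v) = (0, 0) \<or> (int u, int v) = (int x, int y)"
    using vis unfolding b_visible_def by (metis fst_conv snd_conv)
  then show False using \<open>u \<ge> 1\<close> \<open>u < x\<close> by auto
qed

lemma b_visible_if_no_prime_power_divisor:
  fixes b1 b2 x y :: nat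
  assumes b1: "b1 \<ge> 1" and b2: "b2 \<ge> 1" and g: "coprime b1 b2"
    and xy: "x \<ge> 1" "y \<ge> 1"
    and no_prime: "\<not> (\<exists>q. prime q \<and> q ^ b1 dvd x \<and> q ^ b2 dvd y)"
  shows "b_visible (b1, b2) (int x, int y)"
  unfolding b_visible_def
proof (intro conjI allI impI)
  show "(int x, int y) \<noteq> (0, 0)" using xy by simp
  fix a :: "rat \<times> rat" and X :: "int \<times> int"
  assume A: "a \<noteq> (0, 0) \<and> on_b_curve (b1, b2) a (int x, int y)"
  assume B: "on_b_curve (b1, b2) a X \<and> betw 0 (fst (int x, int y)) (fst X)
    \<and> betw 0 (snd (int x, int y)) (snd X)"
  obtain a1 a2 where a: "a = (a1, a2)" by (cases a)
  obtain X1 X2 where "X = (X1, X2)" by (cases X)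
  with B have "0 \<le> X1" "X1 \<le> int x" "0 \<le> X2" "X2 \<le> int y" by (auto simp: betw_def)
  then obtain x' y' where X: "X = (int x', int y')" and le: "x' \<le> x" "y' \<le> y"
    using \<open>X = (X1, X2)\<close> by (metis nat_int_comparison(3) nonneg_int_cases)
  have e1: "a1 * of_nat y ^ b1 = a2 * of_nat x ^ b2" using A a by (simp add: on_b_curve_def)
  have e2: "a1 * of_nat y' ^ b1 = a2 * of_nat x' ^ b2" using B a X by (simp add: on_b_curve_def)
  have "a1 \<noteq> 0" using A a e1 xy by auto
  have "a1 * (of_nat y' ^ b1 * of_nat x ^ b2) = a1 * (of_nat x' ^ b2 * of_nat y ^ b1)"
    using e1 e2 by (metis mult.assoc mult.commute)
  then have "(of_nat (y' ^ b1 * x ^ b2) :: rat) = of_nat (x' ^ b2 * y ^ b1)"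
    using \<open>a1 \<noteq> 0\<close> by simp
  then have "y' ^ b1 * x ^ b2 = x' ^ b2 * y ^ b1" by (simp only: of_nat_eq_iff)
  then have "(x' = 0 \<and> y' = 0) \<or> (x' = x \<and> y' = y)"
    by (rule b_curve_points_between_trivial[OF b1 b2 g xy le _ no_prime])
  then show "X = (0, 0) \<or> X = (int x, int y)" using X by auto
qed

lemma b_visible_iff_no_prime_power_divisor:
  fixes b1 b2 x y :: nat
  assumes "b1 \<ge> 1" "b2 \<ge> 1" "coprime b1 b2" "x \<ge> 1" "y \<ge> 1"
  shows "b_visible (b1, b2) (int x, int y) \<longleftrightarrow> \<not> (\<exists>q. prime q \<and> q ^ b1 dvd x \<and> q ^ b2 dvd y)"
  using assms not_b_visible_if_prime_power_divisor b_visible_if_no_prime_power_divisor by blast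

definition prime_power_divisors :: "nat \<Rightarrow> nat \<Rightarrow> nat set" where
  "prime_power_divisors e k = {q. prime q \<and> q ^ e dvd k}"

lemma prime_power_divisors_subset:
  assumes "k \<ge> 1" "e \<ge> 1"
  shows "prime_power_divisors e k \<subseteq> prime_factors k"
proof
  fix q assume "q \<in> prime_power_divisors e k"
  then have "prime q" "q ^ e dvd k" by (auto simp: prime_power_divisors_def)
  then have "q dvd k" using assms by (intro dvd_trans[OF dvd_power[of e q]]) auto
  then show "q \<in> prime_factors k" using assms \<open>prime q\<close> by (auto simp: prime_factors_dvd)
qed

lemma finite_prime_power_divisors: "k \<ge> 1 \<Longrightarrow> e \<ge> 1 \<Longrightarrow> finite (prime_power_divisors e k)"
  using prime_power_divisors_subset finite_subset by blast

text \<open>On the antidiagonal \<open>x + y = k\<close>, a common prime \<open>q\<close> with \<open>q^b1 dvd x\<close> and \<open>q^b2 dvd y\<close>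
  also satisfies \<open>q^b1 dvd k\<close> (as \<open>b1 \<le> b2\<close>); so visibility only depends on \<open>y\<close> modulo the
  finitely many \<open>q^b2\<close> with \<open>q\<close> in \<open>prime_power_divisors b1 k\<close>.\<close>

lemma b_visible_antidiagonal_iff:
  fixes b1 b2 k x :: nat
  assumes b1: "b1 \<ge> 1" and b12: "b1 \<le> b2" and g: "coprime b1 b2" and x: "1 \<le> x" "x < k"
  shows "b_visible (b1, b2) (int x, int (k - x))
    \<longleftrightarrow> (\<forall>q\<in>prime_power_divisors b1 k. \<not> q ^ b2 dvd (k - x))"
proof -
  have "q ^ b1 dvd x \<and> q ^ b2 dvd (k - x) \<longleftrightarrow> q ^ b1 dvd k \<and> q ^ b2 dvd (k - x)" for q
  proof -
    have "q ^ b2 dvd (k - x) \<Longrightarrow> q ^ b1 dvd (k - x)"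
      using b12 by (meson dvd_trans le_imp_power_dvd)
    moreover have "k = x + (k - x)" using x by simp
    ultimately show ?thesis by (metis dvd_add dvd_add_left_iff)
  qed
  then show ?thesis
    using b_visible_iff_no_prime_power_divisor[of b1 b2 x "k - x"] assms
    by (auto simp: prime_power_divisors_def)
qed

lemma prod_prime_powers_dvd_iff:
  fixes T :: "nat set"
  assumes "finite T" "\<forall>q\<in>T. prime q"
  shows "(\<Prod>q\<in>T. q ^ e) dvd y \<longleftrightarrow> (\<forall>q\<in>T. q ^ e dvd y)"
  using assms
proof (induction T rule: finite_induct)
  case (insert q T)
  have "coprime (q ^ e) (\<Prod>q\<in>T. q ^ e)"
    using insert by (intro prod_coprime_right coprime_power_left_iff[THEN iffD2]
        coprime_power_right_iff[THEN iffD2] disjI1 primes_coprime) auto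
  then show ?case using insert by (auto simp: divides_mult dest: dvd_mult_left dvd_mult_right)
qed simp

lemma indicator_no_prime_power_dvd_sieve:
  fixes S :: "nat set"
  assumes "finite S" "\<forall>q\<in>S. prime q"
  shows "(if \<forall>q\<in>S. \<not> q ^ e dvd y then 1 else 0 :: real) =
    (\<Sum>T\<in>Pow S. (-1) ^ card T * (if (\<Prod>q\<in>T. q ^ e) dvd y then 1 else 0))"
proof -
  define ind where "ind q = (if q ^ e dvd y then 1 else 0 :: real)" for q
  have "(if \<forall>q\<in>S. \<not> q ^ e dvd y then 1 else 0 :: real) = (\<Prod>q\<in>S. - ind q + 1)"
    using assms(1) by (induction S rule: finite_induct) (auto simp: ind_def)
  also have "\<dots> = (\<Sum>T\<in>Pow S. (\<Prod>q\<in>T. - ind q) * (\<Prod>q\<in>S - T. 1))"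
    by (rule prod_add[OF assms(1)])
  also have "\<dots> = (\<Sum>T\<in>Pow S. (-1) ^ card T * (if (\<Prod>q\<in>T. q ^ e) dvd y then 1 else 0))"
  proof (rule sum.cong[OF refl])
    fix T assume T: "T \<in> Pow S"
    then have "finite T" using assms(1) finite_subset by auto
    have "(\<Prod>q\<in>T. - ind q) = (-1) ^ card T * (\<Prod>q\<in>T. ind q)"
      using \<open>finite T\<close> by (induction T rule: finite_induct) auto
    also have "(\<Prod>q\<in>T. ind q) = (if \<forall>q\<in>T. q ^ e dvd y then 1 else 0)"
      using \<open>finite T\<close> by (induction T rule: finite_induct) (auto simp: ind_def)
    also have "\<dots> = (if (\<Prod>q\<in>T. q ^ e) dvd y then 1 else 0)"
      using T assms(2) by (subst prod_prime_powers_dvd_iff[OF \<open>finite T\<close>]) auto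
    finally show "(\<Prod>q\<in>T. - ind q) * (\<Prod>q\<in>S - T. 1) =
        (-1) ^ card T * (if (\<Prod>q\<in>T. q ^ e) dvd y then 1 else 0)"
      by simp
  qed
  finally show ?thesis .
qed

lemma prod_prime_factors_le:
  fixes k :: nat assumes "k \<ge> 1"
  shows "(\<Prod>q\<in>prime_factors k. q) \<le> k"
proof -
  have "(\<Prod>q\<in>prime_factors k. q) \<le> (\<Prod>q\<in>prime_factors k. q ^ multiplicity q k)"
  proof (rule prod_mono)
    fix q assume "q \<in> prime_factors k"
    then have "multiplicity q k > 0" "q > 0"
      by (auto simp: prime_factors_multiplicity prime_gt_0_nat)
    then show "0 \<le> q \<and> q \<le> q ^ multiplicity q k" by (simp add: self_le_power)
  qed
  also have "\<dots> = k" using assms prod_prime_factors[of k] by simp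
  finally show ?thesis .
qed

text \<open>Primes below \<open>B = 2 powr (1 / \<epsilon>)\<close> contribute a bounded factor; each larger prime
  factor \<open>q\<close> of \<open>k\<close> satisfies \<open>2 \<le> q powr \<epsilon>\<close>, and their product is at most \<open>k\<close>.\<close>

lemma two_pow_card_prime_factors_le:
  fixes \<epsilon> :: real assumes e: "\<epsilon> > 0"
  obtains C :: real where "C > 0" "\<And>k::nat. k \<ge> 1 \<Longrightarrow> 2 ^ card (prime_factors k) \<le> C * real k powr \<epsilon>"
proof
  define B :: real where "B = 2 powr (1 / \<epsilon>)"
  define N where "N = nat \<lceil>B\<rceil>"
  show "(2::real) ^ N > 0" by simp
  fix k :: nat assume k: "k \<ge> 1"
  define P where "P = prime_factors k"
  define Ps where "Ps = {q\<in>P. real q < B}"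
  have fin: "finite P" "finite Ps" "Ps \<subseteq> P" unfolding P_def Ps_def by auto
  have "Ps \<subseteq> {..<N}"
  proof
    fix q assume "q \<in> Ps"
    then have "real q < real_of_int \<lceil>B\<rceil>" unfolding Ps_def
      using le_of_int_ceiling[of B] by (auto intro: less_le_trans)
    then show "q \<in> {..<N}" unfolding N_def by simp
  qed
  then have "card Ps \<le> N" using card_mono[of "{..<N}" Ps] by simp
  then have small: "(2::real) ^ card Ps \<le> 2 ^ N" by (intro power_increasing) auto
  have "(2::real) ^ card (P - Ps) = (\<Prod>q\<in>P - Ps. 2)" by simp
  also have "\<dots> \<le> (\<Prod>q\<in>P - Ps. real q powr \<epsilon>)"
  proof (rule prod_mono)
    fix q assume "q \<in> P - Ps"
    then have "B powr \<epsilon> \<le> real q powr \<epsilon>"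
      using e unfolding Ps_def B_def by (intro powr_mono2) auto
    then show "0 \<le> (2::real) \<and> 2 \<le> real q powr \<epsilon>" using e by (simp add: B_def powr_powr)
  qed
  also have "\<dots> = (\<Prod>q\<in>P - Ps. real q) powr \<epsilon>" by (simp add: prod_powr_distrib)
  also have "\<dots> \<le> real k powr \<epsilon>"
  proof (rule powr_mono2)
    have "(\<Prod>q\<in>P. q) = (\<Prod>q\<in>P - Ps. q) * (\<Prod>q\<in>Ps. q)"
      using fin by (intro prod.subset_diff) auto
    moreover have "(\<Prod>q\<in>Ps. q) \<ge> 1"
      unfolding Ps_def P_def by (intro prod_ge_1) (auto dest: prime_factors_gt_0_nat)
    ultimately have "(\<Prod>q\<in>P - Ps. q) \<le> (\<Prod>q\<in>P. q)"
      by (metis mult_le_mono2 mult.right_neutral)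
    also have "\<dots> \<le> k" unfolding P_def by (rule prod_prime_factors_le[OF k])
    finally show "(\<Prod>q\<in>P - Ps. real q) \<le> real k" by (simp flip: of_nat_prod)
  qed (use e in \<open>auto intro: prod_nonneg\<close>)
  finally have large: "(2::real) ^ card (P - Ps) \<le> real k powr \<epsilon>" .
  have "card P = card Ps + card (P - Ps)"
    using fin by (simp add: card_Diff_subset card_mono)
  then have "(2::real) ^ card P = 2 ^ card Ps * 2 ^ card (P - Ps)" by (simp add: power_add)
  also have "\<dots> \<le> 2 ^ N * real k powr \<epsilon>" using small large by (intro mult_mono) auto
  finally show "2 ^ card (prime_factors k) \<le> 2 ^ N * real k powr \<epsilon>" unfolding P_def .
qed

definition binom_weight :: "nat \<Rightarrow> real \<Rightarrow> nat \<Rightarrow> real" where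
  "binom_weight m a j = real (m choose j) * a ^ j * (1 - a) ^ (m - j)"

lemma binom_weight_nonneg: "0 \<le> a \<Longrightarrow> a \<le> 1 \<Longrightarrow> 0 \<le> binom_weight m a j"
  by (simp add: binom_weight_def)

lemma binom_weight_eq_0: "m < j \<Longrightarrow> binom_weight m a j = 0"
  by (simp add: binom_weight_def)

lemma sum_binom_weight: "(\<Sum>j\<le>m. binom_weight m a j) = 1"
  using binomial_ring[of a "1 - a" m] by (simp add: binom_weight_def)

lemma binom_weight_le_1: "0 \<le> a \<Longrightarrow> a \<le> 1 \<Longrightarrow> binom_weight m a j \<le> 1"
proof (cases "j \<le> m")
  case True
  assume "0 \<le> a" "a \<le> 1"
  then have "binom_weight m a j \<le> (\<Sum>j\<le>m. binom_weight m a j)"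
    using True by (intro member_le_sum) (auto simp: binom_weight_nonneg)
  then show ?thesis by (simp add: sum_binom_weight)
qed (simp add: binom_weight_eq_0)

lemma binom_weight_symmetric: "j \<le> m \<Longrightarrow> binom_weight m a j = binom_weight m (1 - a) (m - j)"
  by (simp add: binom_weight_def binomial_symmetric[of j m] algebra_simps)

lemma binom_weight_Suc:
  assumes "j < m"
  shows "binom_weight m a (Suc j) * ((1 - a) * (real j + 1)) =
    binom_weight m a j * (a * (real m - real j))"
proof -
  have "Suc j * (m choose Suc j) = m * ((m - 1) choose (Suc j - 1))"
    by (rule times_binomial_minus1_eq) simp
  moreover have "(m - j) * (m choose j) = m * ((m - 1) choose j)" by (rule binomial_absorb_comp)
  ultimately have "real (Suc j * (m choose Suc j)) = real ((m - j) * (m choose j))" by simp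
  then have c: "real (m choose Suc j) * (real j + 1) = real (m choose j) * (real m - real j)"
    using assms by (simp add: of_nat_diff algebra_simps)
  have e: "m - j = Suc (m - Suc j)" using assms by simp
  have "binom_weight m a (Suc j) * ((1 - a) * (real j + 1)) =
      (real (m choose Suc j) * (real j + 1)) * a ^ Suc j * (1 - a) ^ Suc (m - Suc j)"
    by (simp add: binom_weight_def algebra_simps)
  also have "\<dots> = real (m choose j) * (real m - real j) * a ^ Suc j * (1 - a) ^ (m - j)"
    using c e by simp
  also have "\<dots> = binom_weight m a j * (a * (real m - real j))"
    by (simp add: binom_weight_def algebra_simps)
  finally show ?thesis .
qed

lemma binom_weight_mono_step:
  assumes "0 < a" "a < 1" "j < m" "(1 - a) * (real j + 1) \<le> a * (real m - real j)"
  shows "binom_weight m a j \<le> binom_weight m a (Suc j)"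
proof -
  have "binom_weight m a j * ((1 - a) * (real j + 1)) \<le> binom_weight m a j * (a * (real m - real j))"
    using assms binom_weight_nonneg[of a m j] by (intro mult_left_mono) auto
  also have "\<dots> = binom_weight m a (Suc j) * ((1 - a) * (real j + 1))"
    using binom_weight_Suc[OF assms(3)] by simp
  finally show ?thesis using assms(1,2) by (simp add: mult_le_cancel_right_pos)
qed

lemma binom_weight_antimono_step:
  assumes "0 < a" "a < 1" "j < m" "a * (real m - real j) \<le> (1 - a) * (real j + 1)"
  shows "binom_weight m a (Suc j) \<le> binom_weight m a j"
proof -
  have "binom_weight m a (Suc j) * ((1 - a) * (real j + 1)) = binom_weight m a j * (a * (real m - real j))"
    using binom_weight_Suc[OF assms(3)] by simp
  also have "\<dots> \<le> binom_weight m a j * ((1 - a) * (real j + 1))"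
    using assms binom_weight_nonneg[of a m j] by (intro mult_left_mono) auto
  finally show ?thesis using assms(1,2) by (simp add: mult_le_cancel_right_pos)
qed

lemma binom_weight_Suc_ge:
  assumes a: "0 < a" "a < 1" and b: "real b \<le> a * real m + real L" "b < m"
    and \<delta>: "0 \<le> \<delta>" "\<delta> \<le> 1" "\<delta> * (a * (1 - a) * real m) = real L + 1"
  shows "binom_weight m a b * (1 - \<delta>) \<le> binom_weight m a (Suc b)"
proof -
  define x where "x = a * (1 - a) * real m"
  have "a * (real m - real b) \<ge> a * (real m - (a * real m + real L))"
    using b a by (intro mult_left_mono) auto
  then have lower: "a * (real m - real b) \<ge> x - a * real L" by (simp add: x_def algebra_simps)
  have "(1 - a) * (real b + 1) \<le> (1 - a) * (a * real m + real L + 1)"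
    using b a by (intro mult_left_mono) auto
  then have "(1 - \<delta>) * ((1 - a) * (real b + 1)) \<le> (1 - \<delta>) * (x + (1 - a) * (real L + 1))"
    using \<delta> by (intro mult_left_mono) (auto simp: x_def algebra_simps)
  also have "\<dots> = x - a * (real L + 1) - \<delta> * ((1 - a) * (real L + 1))"
    using \<delta>(3)[folded x_def] by (simp add: algebra_simps)
  also have "\<dots> \<le> x - a * real L"
  proof -
    have "0 \<le> \<delta> * ((1 - a) * (real L + 1))" using \<delta> a by simp
    moreover have "a * (real L + 1) = a * real L + a" by (simp add: algebra_simps)
    ultimately show ?thesis using a by linarith
  qed
  finally have "(1 - \<delta>) * ((1 - a) * (real b + 1)) \<le> a * (real m - real b)" using lower by linarith
  then have "binom_weight m a b * (1 - \<delta>) * ((1 - a) * (real b + 1)) \<le>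
      binom_weight m a b * (a * (real m - real b))"
    using binom_weight_nonneg[of a m b] a by (simp add: mult.assoc mult_left_mono)
  also have "\<dots> = binom_weight m a (Suc b) * ((1 - a) * (real b + 1))"
    using binom_weight_Suc[OF b(2)] by simp
  finally show ?thesis using a by (simp add: mult_le_cancel_right_pos)
qed

lemma binom_weight_shift_ge:
  assumes a: "0 < a" "a < 1" and j: "real j \<le> a * real m" and L: "a * real m + real L < real m"
    and \<delta>: "0 \<le> \<delta>" "\<delta> \<le> 1" "\<delta> * (a * (1 - a) * real m) = real L + 1"
  shows "t \<le> L \<Longrightarrow> binom_weight m a j * (1 - real t * \<delta>) \<le> binom_weight m a (j + t)"
proof (induction t)
  case (Suc t)
  have "binom_weight m a j * (1 - real (Suc t) * \<delta>) \<le> binom_weight m a j * ((1 - real t * \<delta>) * (1 - \<delta>))"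
    using \<delta> binom_weight_nonneg[of a m j] a by (intro mult_left_mono) (auto simp: algebra_simps)
  also have "\<dots> \<le> binom_weight m a (j + t) * (1 - \<delta>)"
    using Suc \<delta> by (simp add: mult.assoc[symmetric] mult_right_mono)
  also have "\<dots> \<le> binom_weight m a (Suc (j + t))"
    using Suc.prems j L by (intro binom_weight_Suc_ge[OF a _ _ \<delta>]) auto
  finally show ?case by simp
qed simp

text \<open>Left of the mean: the \<open>L + 1 \<approx> \<sigma> / 2\<close> weights following \<open>j\<close> are all at least half of
  the weight at \<open>j\<close> and sum to at most \<open>1\<close>.\<close>

lemma binom_weight_le_left:
  assumes a: "0 < a" "a < 1" and j: "real j \<le> a * real m" and x4: "4 \<le> a * (1 - a) * real m"
  shows "binom_weight m a j \<le> 4 / sqrt (a * (1 - a) * real m)"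
proof -
  define x where "x = a * (1 - a) * real m"
  define s where "s = sqrt x"
  define L where "L = nat \<lfloor>s / 2\<rfloor>"
  define \<delta> where "\<delta> = (real L + 1) / x"
  have x0: "x > 0" using x4 x_def by simp
  have s2: "s \<ge> 2" unfolding s_def using x4 x_def real_sqrt_le_mono[of 4 x] by simp
  have ss: "s * s = x" unfolding s_def using x0 by simp
  have L1: "real L \<le> s / 2" and L2: "s / 2 < real L + 1" unfolding L_def using s2 by linarith+
  have "s * 2 \<le> s * s" using s2 by (intro mult_left_mono) auto
  then have Lx: "real L \<le> x / 4" using ss L1 by simp
  have "real L * real L \<le> (s / 2) * (s / 2)" using L1 by (intro mult_mono) auto
  then have LL: "real L * real L \<le> x / 4" using ss by simp
  have dx: "\<delta> * x = real L + 1" and d0: "0 \<le> \<delta>" unfolding \<delta>_def using x0 by simp_all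
  have "\<delta> * real L * x = (\<delta> * x) * real L" by (simp add: algebra_simps)
  also have "\<dots> = (real L + 1) * real L" using dx by simp
  also have "\<dots> \<le> 1 / 2 * x" using LL Lx by (simp add: algebra_simps)
  finally have dL: "\<delta> * real L \<le> 1 / 2" using x0 by simp
  have d1: "\<delta> \<le> 1" unfolding \<delta>_def using Lx x4 x0 x_def by simp
  have "(1 - a) * real m > 0" using x0 a unfolding x_def by (simp add: zero_less_mult_iff)
  then have "a * ((1 - a) * real m) < 4 * ((1 - a) * real m)" using a by (intro mult_strict_right_mono) auto
  then have "x / 4 < (1 - a) * real m" unfolding x_def by (simp add: mult.assoc)
  then have am: "a * real m + real L < real m" using Lx by (simp add: algebra_simps)
  have "(\<Sum>t\<le>L. binom_weight m a j / 2) \<le> (\<Sum>t\<le>L. binom_weight m a (j + t))"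
  proof (intro sum_mono)
    fix t assume t: "t \<in> {..L}"
    then have "real t * \<delta> \<le> real L * \<delta>" using d0 by (intro mult_right_mono) auto
    then have "real t * \<delta> \<le> 1 / 2" using dL by (simp add: mult.commute)
    then have "binom_weight m a j * (1 / 2) \<le> binom_weight m a j * (1 - real t * \<delta>)"
      using binom_weight_nonneg[of a m j] a by (intro mult_left_mono) auto
    also have "\<dots> \<le> binom_weight m a (j + t)"
      using t dx unfolding x_def by (intro binom_weight_shift_ge[OF a j am d0 d1]) auto
    finally show "binom_weight m a j / 2 \<le> binom_weight m a (j + t)" by simp
  qed
  also have "\<dots> = (\<Sum>i\<in>(\<lambda>t. j + t) ` {..L}. binom_weight m a i)"
    by (subst sum.reindex) (auto simp: inj_on_def)
  also have "\<dots> \<le> (\<Sum>i\<le>m. binom_weight m a i)"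
    using j am a by (intro sum_mono2) (auto simp: binom_weight_nonneg)
  finally have "(\<Sum>t\<le>L. binom_weight m a j / 2) \<le> 1" by (simp only: sum_binom_weight)
  then have "binom_weight m a j \<le> 2 / (real L + 1)"
    by (subst pos_le_divide_eq) (simp_all add: algebra_simps)
  also have "\<dots> \<le> 2 / (s / 2)" using L2 s2 by (intro divide_left_mono) auto
  finally show ?thesis by (simp add: s_def x_def)
qed

lemma binom_weight_le:
  assumes a: "0 < a" "a < 1" and m: "m \<ge> 1"
  shows "binom_weight m a j \<le> 4 / sqrt (a * (1 - a) * real m)"
proof (cases "4 \<le> a * (1 - a) * real m")
  case False
  have xp: "0 < a * (1 - a) * real m" using a m by simp
  have "sqrt (a * (1 - a) * real m) < 2" using False xp
    by (metis real_sqrt_four real_sqrt_less_mono not_le)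
  then have "2 \<le> 4 / sqrt (a * (1 - a) * real m)" using xp by (simp add: field_simps)
  then show ?thesis using binom_weight_le_1[of a m j] a by simp
next
  case True
  show ?thesis
  proof (cases "real j \<le> a * real m")
    case True2: True
    show ?thesis by (rule binom_weight_le_left[OF a True2 True])
  next
    case False
    show ?thesis
    proof (cases "j \<le> m")
      case jm: True
      have "binom_weight m a j = binom_weight m (1 - a) (m - j)" by (rule binom_weight_symmetric[OF jm])
      also have "\<dots> \<le> 4 / sqrt ((1 - a) * (1 - (1 - a)) * real m)"
        using a False jm True by (intro binom_weight_le_left) (auto simp: of_nat_diff algebra_simps)
      finally show ?thesis by (simp add: algebra_simps)
    qed (use a in \<open>simp add: binom_weight_eq_0\<close>)
  qed
qed

text \<open>The total variation of \<open>f\<close> regarded as a sequence on \<open>\<int>\<close> vanishing on the negative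
  integers (whence the term \<open>\<bar>f 0\<bar>\<close>) and beyond \<open>m + 1\<close>.\<close>

definition total_variation :: "(nat \<Rightarrow> real) \<Rightarrow> nat \<Rightarrow> real" where
  "total_variation f m = \<bar>f 0\<bar> + (\<Sum>b\<le>m. \<bar>f (Suc b) - f b\<bar>)"

lemma total_variation_unimodal:
  fixes f :: "nat \<Rightarrow> real"
  assumes tm: "t \<le> m" and up: "\<And>b. b < t \<Longrightarrow> f b \<le> f (Suc b)"
    and down: "\<And>b. t \<le> b \<Longrightarrow> b \<le> m \<Longrightarrow> f (Suc b) \<le> f b"
    and "f (Suc m) = 0" and "f 0 \<ge> 0"
  shows "total_variation f m = 2 * f t"
proof -
  have "\<bar>f (Suc b) - f b\<bar> = (f b - f (Suc b)) + (if b \<in> {..<t} then 2 * (f (Suc b) - f b) else 0)"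
    if "b \<in> {..<Suc m}" for b
    using up[of b] down[of b] that by auto
  then have "(\<Sum>b\<le>m. \<bar>f (Suc b) - f b\<bar>) =
      (\<Sum>b<Suc m. f b - f (Suc b)) + (\<Sum>b<Suc m. if b \<in> {..<t} then 2 * (f (Suc b) - f b) else 0)"
    by (simp add: lessThan_Suc_atMost[symmetric] sum.distrib)
  also have "(\<Sum>b<Suc m. f b - f (Suc b)) = f 0 - f (Suc m)" by (rule sum_lessThan_telescope')
  also have "(\<Sum>b<Suc m. if b \<in> {..<t} then 2 * (f (Suc b) - f b) else 0) =
      (\<Sum>b\<in>{..<Suc m} \<inter> {..<t}. 2 * (f (Suc b) - f b))"
    by (rule sum.inter_restrict[symmetric]) simp
  also have "{..<Suc m} \<inter> {..<t} = {..<t}" using tm by auto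
  also have "(\<Sum>b<t. 2 * (f (Suc b) - f b)) = 2 * (f t - f 0)"
    by (simp only: sum_distrib_left[symmetric] sum_lessThan_telescope)
  finally show ?thesis unfolding total_variation_def using assms by simp
qed

text \<open>The weights increase up to \<open>\<lfloor>a (m + 1)\<rfloor>\<close> and decrease afterwards.\<close>

lemma total_variation_binom_weight:
  assumes a: "0 < a" "a < 1" and m: "m \<ge> 1"
  shows "total_variation (binom_weight m a) m \<le> 8 / sqrt (a * (1 - a) * real m)"
proof -
  define t where "t = nat \<lfloor>a * (real m + 1)\<rfloor>"
  have t1: "real t \<le> a * (real m + 1)" unfolding t_def using a by (simp add: of_nat_nat)
  have t2: "a * (real m + 1) < real t + 1" unfolding t_def using a by linarith
  have "real t < real (Suc m)" using t1 a by (smt (verit) mult_le_cancel_right1 of_nat_0_le_iff of_nat_Suc)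
  then have tm: "t \<le> m" by (simp only: of_nat_less_iff)
  have "total_variation (binom_weight m a) m = 2 * binom_weight m a t"
  proof (rule total_variation_unimodal[OF tm])
    fix b assume "b < t"
    then have "real b + 1 \<le> a * (real m + 1)" using t1 by linarith
    then show "binom_weight m a b \<le> binom_weight m a (Suc b)"
      using \<open>b < t\<close> tm a by (intro binom_weight_mono_step) (auto simp: algebra_simps)
  next
    fix b assume b: "t \<le> b" "b \<le> m"
    show "binom_weight m a (Suc b) \<le> binom_weight m a b"
    proof (cases "b = m")
      case False
      have "a * (real m + 1) < real b + 1" using t2 b by linarith
      then show ?thesis
        using False b a by (intro binom_weight_antimono_step) (auto simp: algebra_simps)
    qed (use a in \<open>simp add: binom_weight_eq_0 binom_weight_nonneg\<close>)
  qed (use a in \<open>simp_all add: binom_weight_eq_0 binom_weight_nonneg\<close>)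
  also have "\<dots> \<le> 8 / sqrt (a * (1 - a) * real m)" using binom_weight_le[OF a m, of t] by simp
  finally show ?thesis .
qed

lemma sum_indicator_dvd_consecutive:
  fixes z :: int and D :: nat
  assumes "D \<ge> 1"
  shows "(\<Sum>e<D. if int D dvd z + int e then 1 else 0 :: real) = 1"
proof -
  define r where "r = (- z) mod int D"
  have r: "0 \<le> r" "r < int D" using assms unfolding r_def by auto
  have "int D dvd z + int e \<longleftrightarrow> e = nat r" if "e < D" for e
  proof -
    have "int D dvd z + int e \<longleftrightarrow> int e mod int D = (- z) mod int D"
      by (simp add: mod_eq_dvd_iff add.commute)
    then show ?thesis using that r unfolding r_def by auto
  qed
  then have "(\<Sum>e<D. if int D dvd z + int e then 1 else 0 :: real) = (\<Sum>e<D. if e = nat r then 1 else 0)"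
    by (intro sum.cong) auto
  also have "\<dots> = 1" using r by simp
  finally show ?thesis .
qed

lemma window_sum_one_close_to_mean:
  fixes G :: "int \<Rightarrow> real" and D :: nat
  assumes D: "D \<ge> 1" and sum1: "\<And>z. (\<Sum>s<D. G (z + int s)) = 1"
    and var: "\<And>z. (\<Sum>e<D. \<bar>G (z + int e + 1) - G (z + int e)\<bar>) \<le> V"
  shows "\<bar>G c - 1 / real D\<bar> \<le> V"
proof -
  have telescope: "\<bar>G (z + int s) - G z\<bar> \<le> (\<Sum>e<s. \<bar>G (z + int e + 1) - G (z + int e)\<bar>)" for z s
  proof (induction s)
    case (Suc s)
    have e: "z + int (Suc s) = z + int s + 1" by simp
    have "\<bar>G (z + int (Suc s)) - G z\<bar> \<le> \<bar>G (z + int s + 1) - G (z + int s)\<bar> + \<bar>G (z + int s) - G z\<bar>"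
      unfolding e using abs_triangle_ineq[of "G (z + int s + 1) - G (z + int s)" "G (z + int s) - G z"]
      by simp
    then show ?case using Suc by simp
  qed simp
  have "\<bar>G c - G (c + int s)\<bar> \<le> V" if "s < D" for s
  proof -
    have "\<bar>G c - G (c + int s)\<bar> \<le> (\<Sum>e<s. \<bar>G (c + int e + 1) - G (c + int e)\<bar>)"
      using telescope[of c s] by (simp add: abs_minus_commute)
    also have "\<dots> \<le> (\<Sum>e<D. \<bar>G (c + int e + 1) - G (c + int e)\<bar>)"
      using that by (intro sum_mono2) auto
    finally show ?thesis using var[of c] by simp
  qed
  then have "(\<Sum>s<D. \<bar>G c - G (c + int s)\<bar>) \<le> (\<Sum>s<D. V)" by (intro sum_mono) simp
  then have "\<bar>\<Sum>s<D. G c - G (c + int s)\<bar> \<le> real D * V"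
    by (intro order_trans[OF sum_abs]) simp
  moreover have "(\<Sum>s<D. G c - G (c + int s)) = real D * (G c - 1 / real D)"
    using sum1[of c] D by (simp add: sum_subtractf algebra_simps)
  ultimately show ?thesis using D by (simp add: abs_mult)
qed

lemma weighted_dvd_count_close:
  fixes f :: "nat \<Rightarrow> real" and D :: nat and c :: int
  assumes D: "D \<ge> 1" and fm: "f (Suc m) = 0" and fs: "(\<Sum>b\<le>m. f b) = 1"
  shows "\<bar>(\<Sum>b\<le>m. f b * (if int D dvd c - int b then 1 else 0)) - 1 / real D\<bar> \<le> total_variation f m"
proof -
  define ind where "ind z = (if int D dvd z then 1 else 0 :: real)" for z
  define F where "F z = (\<Sum>b\<le>m. f b * ind (z - int b))" for z
  have cnt: "(\<Sum>e<D. ind (z + int e)) = 1" for z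
    unfolding ind_def by (rule sum_indicator_dvd_consecutive[OF D])
  have step: "F (z + 1) - F z = f 0 * ind (z + 1) + (\<Sum>b\<le>m. (f (Suc b) - f b) * ind (z - int b))" for z
  proof -
    have "F (z + 1) = (\<Sum>b\<le>Suc m. f b * ind (z + 1 - int b))" unfolding F_def using fm by simp
    also have "\<dots> = f 0 * ind (z + 1) + (\<Sum>b\<le>m. f (Suc b) * ind (z - int b))"
      by (subst sum.atMost_Suc_shift) simp
    finally show ?thesis unfolding F_def by (simp add: sum_subtractf algebra_simps)
  qed
  have "(\<Sum>s<D. F (z + int s)) = 1" for z
  proof -
    have "(\<Sum>s<D. F (z + int s)) = (\<Sum>b\<le>m. f b * (\<Sum>s<D. ind ((z - int b) + int s)))"
      unfolding F_def by (simp add: sum_distrib_left sum.swap[of _ "{..<D}"] algebra_simps)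
    then show ?thesis by (simp add: cnt fs)
  qed
  moreover have "(\<Sum>e<D. \<bar>F (z + int e + 1) - F (z + int e)\<bar>) \<le> total_variation f m" for z
  proof -
    have "\<bar>F (y + 1) - F y\<bar> \<le> \<bar>f 0\<bar> * ind (y + 1) + (\<Sum>b\<le>m. \<bar>f (Suc b) - f b\<bar> * ind (y - int b))"
      for y
    proof -
      have "\<bar>F (y + 1) - F y\<bar> \<le> \<bar>f 0 * ind (y + 1)\<bar> + \<bar>\<Sum>b\<le>m. (f (Suc b) - f b) * ind (y - int b)\<bar>"
        unfolding step by (rule abs_triangle_ineq)
      also have "\<bar>\<Sum>b\<le>m. (f (Suc b) - f b) * ind (y - int b)\<bar> \<le> (\<Sum>b\<le>m. \<bar>(f (Suc b) - f b) * ind (y - int b)\<bar>)"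
        by (rule sum_abs)
      finally show ?thesis by (simp add: abs_mult ind_def)
    qed
    then have "(\<Sum>e<D. \<bar>F (z + int e + 1) - F (z + int e)\<bar>) \<le>
        (\<Sum>e<D. \<bar>f 0\<bar> * ind (z + int e + 1) + (\<Sum>b\<le>m. \<bar>f (Suc b) - f b\<bar> * ind (z + int e - int b)))"
      by (intro sum_mono)
    also have "\<dots> = \<bar>f 0\<bar> * (\<Sum>e<D. ind ((z + 1) + int e))
        + (\<Sum>b\<le>m. \<bar>f (Suc b) - f b\<bar> * (\<Sum>e<D. ind ((z - int b) + int e)))"
      by (simp add: sum.distrib sum_distrib_left sum.swap[of _ "{..<D}"] algebra_simps)
    finally show ?thesis by (simp add: cnt total_variation_def)
  qed
  ultimately have "\<bar>F c - 1 / real D\<bar> \<le> total_variation f m"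
    by (rule window_sum_one_close_to_mean[OF D])
  then show ?thesis unfolding F_def ind_def by simp
qed

lemma sieve_average_close:
  fixes f :: "nat \<Rightarrow> real" and S :: "nat set"
  assumes S: "finite S" "\<forall>q\<in>S. prime q" and mN: "m \<le> N"
    and fm: "f (Suc m) = 0" and fs: "(\<Sum>b\<le>m. f b) = 1"
  shows "\<bar>(\<Sum>b\<le>m. f b * (if \<forall>q\<in>S. \<not> q ^ e dvd (N - b) then 1 else 0))
      - (\<Sum>T\<in>Pow S. (-1) ^ card T / real (\<Prod>q\<in>T. q ^ e))\<bar> \<le> 2 ^ card S * total_variation f m"
proof -
  define P :: "nat set \<Rightarrow> nat" where "P T = (\<Prod>q\<in>T. q ^ e)" for T
  define FT where "FT T = (\<Sum>b\<le>m. f b * (if int (P T) dvd int N - int b then 1 else 0))" for T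
  have "(\<Sum>b\<le>m. f b * (if \<forall>q\<in>S. \<not> q ^ e dvd (N - b) then 1 else 0)) =
      (\<Sum>b\<le>m. \<Sum>T\<in>Pow S. f b * ((-1) ^ card T * (if int (P T) dvd int N - int b then 1 else 0)))"
  proof (intro sum.cong refl)
    fix b assume "b \<in> {..m}"
    then have "P T dvd N - b \<longleftrightarrow> int (P T) dvd int N - int b" for T
      using mN by (simp add: of_nat_diff flip: int_dvd_int_iff)
    then show "f b * (if \<forall>q\<in>S. \<not> q ^ e dvd (N - b) then 1 else 0) =
        (\<Sum>T\<in>Pow S. f b * ((-1) ^ card T * (if int (P T) dvd int N - int b then 1 else 0)))"
      unfolding indicator_no_prime_power_dvd_sieve[OF S] P_def by (simp add: sum_distrib_left)
  qed
  also have "\<dots> = (\<Sum>T\<in>Pow S. (-1) ^ card T * FT T)"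
    unfolding FT_def by (subst sum.swap) (simp add: sum_distrib_left algebra_simps)
  finally have "(\<Sum>b\<le>m. f b * (if \<forall>q\<in>S. \<not> q ^ e dvd (N - b) then 1 else 0))
      - (\<Sum>T\<in>Pow S. (-1) ^ card T / real (P T)) = (\<Sum>T\<in>Pow S. (-1) ^ card T * (FT T - 1 / real (P T)))"
    by (simp add: sum_subtractf right_diff_distrib)
  moreover have "\<bar>(-1) ^ card T * (FT T - 1 / real (P T))\<bar> \<le> total_variation f m" if "T \<in> Pow S" for T
  proof -
    have "P T \<ge> 1" unfolding P_def using that S by (intro prod_ge_1) (auto simp: Suc_le_eq prime_gt_0_nat)
    then have "\<bar>FT T - 1 / real (P T)\<bar> \<le> total_variation f m"
      unfolding FT_def by (rule weighted_dvd_count_close[OF _ fm fs])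
    then show ?thesis by (simp add: abs_mult)
  qed
  ultimately have "\<bar>(\<Sum>b\<le>m. f b * (if \<forall>q\<in>S. \<not> q ^ e dvd (N - b) then 1 else 0))
      - (\<Sum>T\<in>Pow S. (-1) ^ card T / real (P T))\<bar> \<le> (\<Sum>T\<in>Pow S. total_variation f m)"
    by (simp only:) (intro order_trans[OF sum_abs] sum_mono)
  then show ?thesis using S by (simp add: card_Pow P_def)
qed

definition visible_indicator :: "nat \<Rightarrow> nat \<Rightarrow> nat \<Rightarrow> nat \<Rightarrow> real" where
  "visible_indicator b1 b2 k x = (if b_visible (b1, b2) (int x, int (k - x)) then 1 else 0)"

text \<open>By inclusion-exclusion, the density of those \<open>y\<close> for which \<open>(k - y, y)\<close> is visible.\<close>

definition visible_density :: "nat \<Rightarrow> nat \<Rightarrow> nat \<Rightarrow> real" where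
  "visible_density b1 b2 k =
    (\<Sum>T\<in>Pow (prime_power_divisors b1 k). (-1) ^ card T / real (\<Prod>q\<in>T. q ^ b2))"

text \<open>The probability that a walk with right-step probability \<open>a\<close>, standing at abscissa \<open>x\<close>
  \<open>m\<close> steps before time \<open>k\<close>, is visible at time \<open>k\<close>.\<close>

definition visible_prob_from :: "nat \<Rightarrow> nat \<Rightarrow> nat \<Rightarrow> nat \<Rightarrow> real \<Rightarrow> nat \<Rightarrow> real" where
  "visible_prob_from b1 b2 k m a x = (\<Sum>b\<le>m. binom_weight m a b * visible_indicator b1 b2 k (x + b))"

lemma visible_prob_from_close:
  fixes b1 b2 k i x :: nat and a :: real
  assumes b1: "b1 \<ge> 1" and b12: "b1 \<le> b2" and g: "coprime b1 b2"
    and a: "0 < a" "a < 1" and ik: "i < k" and x: "x \<le> i"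
  shows "\<bar>visible_prob_from b1 b2 k (k - i) a x - visible_density b1 b2 k\<bar>
    \<le> (2 ^ card (prime_power_divisors b1 k) + 1) * (8 / sqrt (a * (1 - a) * real (k - i)))"
proof -
  define m where "m = k - i"
  define S where "S = prime_power_divisors b1 k"
  define E where "E = 8 / sqrt (a * (1 - a) * real m)"
  define h where "h b = (if \<forall>q\<in>S. \<not> q ^ b2 dvd (k - x - b) then 1 else 0 :: real)" for b
  have m1: "m \<ge> 1" using ik m_def by simp
  have fS: "finite S" unfolding S_def using finite_prime_power_divisors ik b1 by simp
  have wn: "0 \<le> binom_weight m a b" for b using a by (simp add: binom_weight_nonneg)
  have wmax: "binom_weight m a b \<le> E / 2" for b unfolding E_def using binom_weight_le[OF a m1] by simp
  have "\<bar>binom_weight m a b * visible_indicator b1 b2 k (x + b) - binom_weight m a b * h b\<bar> \<le>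
      (if b = 0 then binom_weight m a b else 0) + (if b = k - x then binom_weight m a b else 0)"
    if b: "b \<le> m" for b
  proof (cases "1 \<le> x + b \<and> x + b < k")
    case True
    then have "visible_indicator b1 b2 k (x + b) = h b"
      unfolding visible_indicator_def h_def S_def
      using b_visible_antidiagonal_iff[OF b1 b12 g, of "x + b" k] by (simp add: diff_diff_add)
    then show ?thesis using wn by simp
  next
    case False
    then have "b = 0 \<or> b = k - x" using b x ik m_def by auto
    moreover have "\<bar>visible_indicator b1 b2 k (x + b) - h b\<bar> \<le> 1" by (simp add: visible_indicator_def h_def)
    then have "\<bar>binom_weight m a b * visible_indicator b1 b2 k (x + b) - binom_weight m a b * h b\<bar>
        \<le> binom_weight m a b"
      using wn[of b] by (simp add: abs_mult right_diff_distrib[symmetric] mult_left_le)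
    ultimately show ?thesis using x ik by auto
  qed
  then have "\<bar>\<Sum>b\<le>m. binom_weight m a b * visible_indicator b1 b2 k (x + b) - binom_weight m a b * h b\<bar> \<le>
      (\<Sum>b\<le>m. (if b = 0 then binom_weight m a b else 0) + (if b = k - x then binom_weight m a b else 0))"
    by (intro order_trans[OF sum_abs] sum_mono) auto
  also have "\<dots> \<le> E / 2 + E / 2"
    using wmax[of 0] wmax[of "k - x"] wn[of 0] wn[of "k - x"] by (simp add: sum.distrib)
  finally have endpoints: "\<bar>(\<Sum>b\<le>m. binom_weight m a b * visible_indicator b1 b2 k (x + b))
      - (\<Sum>b\<le>m. binom_weight m a b * h b)\<bar> \<le> E"
    by (simp add: sum_subtractf)
  have "\<bar>(\<Sum>b\<le>m. binom_weight m a b * h b) - visible_density b1 b2 k\<bar> \<le> 2 ^ card S * total_variation (binom_weight m a) m"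
    unfolding h_def visible_density_def S_def
    using x ik m_def finite_prime_power_divisors[of k b1] b1
    by (intro sieve_average_close) (auto simp: prime_power_divisors_def binom_weight_eq_0 sum_binom_weight)
  also have "\<dots> \<le> 2 ^ card S * E"
    unfolding E_def using total_variation_binom_weight[OF a m1] by (intro mult_left_mono) auto
  finally show ?thesis using endpoints
    unfolding visible_prob_from_def m_def[symmetric] E_def[symmetric] S_def[symmetric]
    by (simp add: algebra_simps)
qed

lemma distr_Pi_pmf_restrict:
  assumes fJ: "finite J"
  shows "distr (measure_pmf (Pi_pmf J d p)) (PiM J (\<lambda>i. measure_pmf (p i))) (\<lambda>x. restrict x J)
    = PiM J (\<lambda>i. measure_pmf (p i))"
proof -
  interpret product_prob_space "\<lambda>i. measure_pmf (p i)"
    by (rule product_prob_spaceI) (rule measure_pmf.prob_space_axioms)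
  have mr: "(\<lambda>x. restrict x J) \<in> measurable (measure_pmf (Pi_pmf J d p)) (PiM J (\<lambda>i. measure_pmf (p i)))"
    by (simp add: measurable_count_space_eq1 measurable_cong_sets[OF sets_measure_pmf_count_space refl] space_PiM)
  show ?thesis
  proof (rule PiM_eqI[OF fJ])
    fix A assume A: "\<And>i. i \<in> J \<Longrightarrow> A i \<in> sets (measure_pmf (p i))"
    have "Pi\<^sub>E J A \<in> sets (PiM J (\<lambda>i. measure_pmf (p i)))" using A fJ by (intro sets_PiM_I_finite) auto
    then have "emeasure (distr (measure_pmf (Pi_pmf J d p)) (PiM J (\<lambda>i. measure_pmf (p i))) (\<lambda>x. restrict x J)) (Pi\<^sub>E J A)
        = emeasure (measure_pmf (Pi_pmf J d p)) ((\<lambda>x. restrict x J) -` Pi\<^sub>E J A \<inter> space (measure_pmf (Pi_pmf J d p)))"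
      by (rule emeasure_distr[OF mr])
    also have "\<dots> = emeasure (measure_pmf (Pi_pmf J d p)) (PiE_dflt J d A)"
      by (intro emeasure_eq_AE AE_pmfI) (auto simp: PiE_dflt_def set_Pi_pmf fJ)
    also have "\<dots> = (\<Prod>i\<in>J. emeasure (measure_pmf (p i)) (A i))"
      by (simp add: measure_pmf.emeasure_eq_measure measure_Pi_pmf_PiE_dflt fJ prod_ennreal)
    finally show "emeasure (distr (measure_pmf (Pi_pmf J d p)) (PiM J (\<lambda>i. measure_pmf (p i))) (\<lambda>x. restrict x J)) (Pi\<^sub>E J A)
        = (\<Prod>i\<in>J. emeasure (measure_pmf (p i)) (A i))" .
  qed simp
qed

lemma borel_measurable_PiM_finite:
  fixes G :: "('a \<Rightarrow> 'b) \<Rightarrow> real"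
  assumes fJ: "finite J" and fb: "finite (UNIV :: 'b set)"
  shows "G \<in> borel_measurable (PiM J (\<lambda>i. measure_pmf (p i)))"
proof -
  define Sp where "Sp = (PiE J (\<lambda>_. UNIV) :: ('a \<Rightarrow> 'b) set)"
  have fSp: "finite Sp" unfolding Sp_def using fJ fb by (intro finite_PiE) auto
  have sp: "space (PiM J (\<lambda>i. measure_pmf (p i))) = Sp" by (simp add: space_PiM Sp_def)
  have "{g} \<in> sets (PiM J (\<lambda>i. measure_pmf (p i)))" if "g \<in> Sp" for g
  proof -
    have "{g} = PiE J (\<lambda>x. {g x})" using that unfolding Sp_def by (intro PiE_singleton[symmetric]) (simp add: PiE_iff)
    also have "\<dots> \<in> sets (PiM J (\<lambda>i. measure_pmf (p i)))" using fJ by (intro sets_PiM_I_finite) auto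
    finally show ?thesis .
  qed
  then have "(\<lambda>f. \<Sum>g\<in>Sp. G g * indicator {g} f) \<in> borel_measurable (PiM J (\<lambda>i. measure_pmf (p i)))"
    by (intro borel_measurable_sum borel_measurable_times borel_measurable_const borel_measurable_indicator) auto
  moreover have "(\<Sum>g\<in>Sp. G g * indicator {g} f) = G f" if "f \<in> space (PiM J (\<lambda>i. measure_pmf (p i)))" for f
    using that sp fSp by (simp add: indicator_def)
  ultimately show ?thesis by (rule measurable_cong[THEN iffD1, rotated]) simp
qed

lemma integral_PiM_eq_expectation_Pi_pmf:
  fixes G :: "('a \<Rightarrow> bool) \<Rightarrow> real"
  assumes fJ: "finite J" and JI: "J \<subseteq> I" and dep: "\<And>f g. (\<forall>x\<in>J. f x = g x) \<Longrightarrow> G f = G g"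
  shows "integral\<^sup>L (PiM I (\<lambda>i. measure_pmf (p i))) G = measure_pmf.expectation (Pi_pmf J d p) G"
proof -
  interpret product_prob_space "\<lambda>i. measure_pmf (p i)"
    by (rule product_prob_spaceI) (rule measure_pmf.prob_space_axioms)
  have GJ: "G \<in> borel_measurable (PiM J (\<lambda>i. measure_pmf (p i)))"
    by (rule borel_measurable_PiM_finite[OF fJ]) simp
  have restrict: "G (restrict \<omega> J) = G \<omega>" for \<omega> by (rule dep) simp
  have mr: "(\<lambda>x. restrict x J) \<in> measurable (measure_pmf (Pi_pmf J d p)) (PiM J (\<lambda>i. measure_pmf (p i)))"
    by (simp add: measurable_count_space_eq1 measurable_cong_sets[OF sets_measure_pmf_count_space refl] space_PiM)
  have "integral\<^sup>L (PiM I (\<lambda>i. measure_pmf (p i))) G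
      = integral\<^sup>L (PiM I (\<lambda>i. measure_pmf (p i))) (\<lambda>\<omega>. G (restrict \<omega> J))"
    by (simp add: restrict)
  also have "\<dots> = integral\<^sup>L (distr (PiM I (\<lambda>i. measure_pmf (p i))) (PiM J (\<lambda>i. measure_pmf (p i))) (\<lambda>\<omega>. restrict \<omega> J)) G"
    by (rule integral_distr[OF measurable_restrict_subset[OF JI] GJ, symmetric])
  also have "\<dots> = integral\<^sup>L (distr (measure_pmf (Pi_pmf J d p)) (PiM J (\<lambda>i. measure_pmf (p i))) (\<lambda>x. restrict x J)) G"
    by (simp add: distr_PiM_restrict_finite[OF fJ JI] distr_Pi_pmf_restrict[OF fJ])
  also have "\<dots> = measure_pmf.expectation (Pi_pmf J d p) G"
    by (simp add: integral_distr[OF mr GJ] restrict)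
  finally show ?thesis .
qed

lemma finite_set_Pi_pmf_bool: "finite J \<Longrightarrow> finite (set_pmf (Pi_pmf J (d :: bool) p))"
  using finite_subset[OF set_Pi_pmf_subset, of J d p] finite_PiE_dflt[of J "\<lambda>_. UNIV :: bool set" d]
  by (auto simp: PiE_dflt_def)

lemma expectation_finite_pmf:
  fixes F :: "'a \<Rightarrow> real"
  assumes "finite (set_pmf X)"
  shows "measure_pmf.expectation X F = (\<Sum>a\<in>set_pmf X. F a * pmf X a)"
  using assms by (intro integral_measure_pmf_real) auto

lemma expectation_pair_pmf_mult:
  fixes F :: "'a \<Rightarrow> real" and G :: "'b \<Rightarrow> real"
  assumes fX: "finite (set_pmf X)" and fY: "finite (set_pmf Y)"
  shows "measure_pmf.expectation (pair_pmf X Y) (\<lambda>z. F (fst z) * G (snd z)) =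
    measure_pmf.expectation X F * measure_pmf.expectation Y G"
proof -
  have "measure_pmf.expectation (pair_pmf X Y) (\<lambda>z. F (fst z) * G (snd z)) =
      (\<Sum>z\<in>set_pmf X \<times> set_pmf Y. F (fst z) * G (snd z) * pmf (pair_pmf X Y) z)"
    using expectation_finite_pmf[of "pair_pmf X Y"] fX fY by simp
  also have "\<dots> = (\<Sum>(a, b)\<in>set_pmf X \<times> set_pmf Y. (F a * pmf X a) * (G b * pmf Y b))"
    by (intro sum.cong refl) (auto simp: pmf_pair)
  also have "\<dots> = (\<Sum>a\<in>set_pmf X. F a * pmf X a) * (\<Sum>b\<in>set_pmf Y. G b * pmf Y b)"
    by (simp add: sum.cartesian_product[symmetric] sum_product)
  finally show ?thesis using expectation_finite_pmf[OF fX] expectation_finite_pmf[OF fY] by simp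
qed

lemma expectation_Pi_pmf_union_mult:
  fixes F G :: "('a \<Rightarrow> bool) \<Rightarrow> real"
  assumes A: "finite A" and B: "finite B" and AB: "A \<inter> B = {}"
    and dF: "\<And>f g. (\<forall>x\<in>A. f x = g x) \<Longrightarrow> F f = F g"
    and dG: "\<And>f g. (\<forall>x\<in>B. f x = g x) \<Longrightarrow> G f = G g"
  shows "measure_pmf.expectation (Pi_pmf (A \<union> B) d p) (\<lambda>f. F f * G f) =
    measure_pmf.expectation (Pi_pmf A d p) F * measure_pmf.expectation (Pi_pmf B d p) G"
proof -
  define h where "h = (\<lambda>(f :: 'a \<Rightarrow> bool, g :: 'a \<Rightarrow> bool) x. if x \<in> A then f x else g x)"
  have "F (h z) * G (h z) = F (fst z) * G (snd z)" for z
  proof -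
    obtain f g where z: "z = (f, g)" by (cases z)
    have "F (h z) = F f" by (rule dF) (simp add: h_def z)
    moreover have "G (h z) = G g" by (rule dG) (use AB in \<open>auto simp: h_def z\<close>)
    ultimately show ?thesis by (simp add: z)
  qed
  moreover have "Pi_pmf (A \<union> B) d p = map_pmf h (pair_pmf (Pi_pmf A d p) (Pi_pmf B d p))"
    unfolding h_def by (rule Pi_pmf_union[OF A B AB])
  ultimately show ?thesis
    by (simp add: expectation_pair_pmf_mult finite_set_Pi_pmf_bool A B)
qed

lemma expectation_Pi_pmf_union:
  fixes F :: "('a \<Rightarrow> bool) \<Rightarrow> real"
  assumes "finite A" "finite B" "A \<inter> B = {}" "\<And>f g. (\<forall>x\<in>A. f x = g x) \<Longrightarrow> F f = F g"
  shows "measure_pmf.expectation (Pi_pmf (A \<union> B) d p) F = measure_pmf.expectation (Pi_pmf A d p) F"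
  using expectation_Pi_pmf_union_mult[OF assms, where G = "\<lambda>_. 1" and d = d and p = p] by simp

lemma expectation_Pi_pmf_prod_rows:
  fixes H :: "'j \<Rightarrow> ('j \<times> 'b \<Rightarrow> bool) \<Rightarrow> real"
  assumes W: "finite W" and C: "finite C"
    and dep: "\<And>j f g. j \<in> W \<Longrightarrow> (\<forall>c\<in>C. f (j, c) = g (j, c)) \<Longrightarrow> H j f = H j g"
  shows "measure_pmf.expectation (Pi_pmf (W \<times> C) d p) (\<lambda>f. \<Prod>j\<in>W. H j f) =
    (\<Prod>j\<in>W. measure_pmf.expectation (Pi_pmf ({j} \<times> C) d p) (H j))"
  using W dep
proof (induction W rule: finite_induct)
  case (insert j W)
  have "insert j W \<times> C = ({j} \<times> C) \<union> (W \<times> C)" by auto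
  then have "measure_pmf.expectation (Pi_pmf (insert j W \<times> C) d p) (\<lambda>f. \<Prod>j\<in>insert j W. H j f)
      = measure_pmf.expectation (Pi_pmf (({j} \<times> C) \<union> (W \<times> C)) d p) (\<lambda>f. H j f * (\<Prod>j\<in>W. H j f))"
    using insert.hyps by simp
  also have "\<dots> = measure_pmf.expectation (Pi_pmf ({j} \<times> C) d p) (H j) *
      measure_pmf.expectation (Pi_pmf (W \<times> C) d p) (\<lambda>f. \<Prod>j\<in>W. H j f)"
    using insert C by (intro expectation_Pi_pmf_union_mult prod.cong) auto
  finally show ?case using insert by simp
qed simp

lemma expectation_Pi_pmf_card_two_blocks:
  fixes \<theta> :: "nat \<Rightarrow> nat \<Rightarrow> real"
  assumes A: "finite A" and B: "finite B" and AB: "A \<inter> B = {}"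
    and p: "\<And>x. x \<in> A \<union> B \<Longrightarrow> p x = bernoulli_pmf q" and q: "0 \<le> q" "q \<le> 1"
  shows "measure_pmf.expectation (Pi_pmf (A \<union> B) d p) (\<lambda>f. \<theta> (card {x\<in>A. f x}) (card {x\<in>B. f x})) =
    (\<Sum>a\<le>card A. \<Sum>b\<le>card B. binom_weight (card A) q a * binom_weight (card B) q b * \<theta> a b)"
proof -
  define h where "h = (\<lambda>(f :: 'a \<Rightarrow> bool, g :: 'a \<Rightarrow> bool) x. if x \<in> A then f x else g x)"
  define cA where "cA f = card {x\<in>A. f x}" for f :: "'a \<Rightarrow> bool"
  define cB where "cB f = card {x\<in>B. f x}" for f :: "'a \<Rightarrow> bool"
  define PA where "PA = Pi_pmf A d (\<lambda>_. bernoulli_pmf q)"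
  define PB where "PB = Pi_pmf B d (\<lambda>_. bernoulli_pmf q)"
  have "Pi_pmf (A \<union> B) d p = Pi_pmf (A \<union> B) d (\<lambda>_. bernoulli_pmf q)"
    using p by (intro Pi_pmf_cong) auto
  also have "\<dots> = map_pmf h (pair_pmf PA PB)"
    unfolding h_def PA_def PB_def by (rule Pi_pmf_union[OF A B AB])
  finally have P: "Pi_pmf (A \<union> B) d p = map_pmf h (pair_pmf PA PB)" .
  have "cA (h z) = cA (fst z)" "cB (h z) = cB (snd z)" for z
    using AB by (cases z; auto simp: cA_def cB_def h_def intro!: arg_cong[where f = card])+
  then have "measure_pmf.expectation (Pi_pmf (A \<union> B) d p) (\<lambda>f. \<theta> (cA f) (cB f)) =
      measure_pmf.expectation (map_pmf (\<lambda>(f, g). (cA f, cB g)) (pair_pmf PA PB)) (\<lambda>z. \<theta> (fst z) (snd z))"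
    unfolding P by (simp add: case_prod_beta)
  also have "map_pmf (\<lambda>(f, g). (cA f, cB g)) (pair_pmf PA PB) =
      pair_pmf (binomial_pmf (card A) q) (binomial_pmf (card B) q)"
    unfolding map_pair cA_def cB_def PA_def PB_def
    using binomial_pmf_altdef'[OF A refl, of q d] binomial_pmf_altdef'[OF B refl, of q d] q by simp
  also have "measure_pmf.expectation (pair_pmf (binomial_pmf (card A) q) (binomial_pmf (card B) q))
      (\<lambda>z. \<theta> (fst z) (snd z)) = (\<Sum>z\<in>{..card A} \<times> {..card B}. \<theta> (fst z) (snd z)
        * pmf (pair_pmf (binomial_pmf (card A) q) (binomial_pmf (card B) q)) z)"
    using q by (intro integral_measure_pmf_real) (auto simp: set_pmf_binomial_eq split: if_splits)
  also have "\<dots> = (\<Sum>(a, b)\<in>{..card A} \<times> {..card B}. binom_weight (card A) q a * binom_weight (card B) q b * \<theta> a b)"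
    by (intro sum.cong refl) (auto simp: pmf_pair pmf_binomial q binom_weight_def)
  finally show ?thesis unfolding cA_def cB_def by (simp add: sum.cartesian_product)
qed

definition step_pmf :: "(nat \<Rightarrow> real) \<Rightarrow> nat \<times> nat \<Rightarrow> bool pmf" where
  "step_pmf \<alpha> x = bernoulli_pmf (\<alpha> (fst x))"

text \<open>The first \<open>n\<close> steps of all \<open>r\<close> walks; it is the finite-dimensional marginal of
  \<open>walk_space r \<alpha>\<close>.\<close>

definition walk_pmf :: "nat \<Rightarrow> (nat \<Rightarrow> real) \<Rightarrow> nat \<Rightarrow> (nat \<times> nat \<Rightarrow> bool) pmf" where
  "walk_pmf r \<alpha> n = Pi_pmf ({1..r} \<times> {..<n}) False (step_pmf \<alpha>)"

definition right_steps :: "(nat \<times> nat \<Rightarrow> bool) \<Rightarrow> nat \<Rightarrow> nat \<Rightarrow> nat" where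
  "right_steps \<omega> j i = card {k. k < i \<and> \<omega> (j, k)}"

lemma right_steps_cong: "(\<forall>k<i. f (j, k) = g (j, k)) \<Longrightarrow> right_steps f j i = right_steps g j i"
  unfolding right_steps_def by (intro arg_cong[where f = card]) auto

lemma walk_pos_eq_right_steps: "walk_pos \<omega> j i = (int (right_steps \<omega> j i), int (i - right_steps \<omega> j i))"
proof -
  have "card {k. k < i \<and> \<not> \<omega> (j, k)} = card ({..<i} - {k. k < i \<and> \<omega> (j, k)})"
    by (rule arg_cong[where f = card]) auto
  also have "\<dots> = i - right_steps \<omega> j i" unfolding right_steps_def by (subst card_Diff_subset) auto
  finally have "card {k. k < i \<and> \<not> \<omega> (j, k)} = i - right_steps \<omega> j i" .
  then show ?thesis unfolding walk_pos_def right_steps_def by simp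
qed

lemma Y_ind_eq_prod:
  "Y_ind (b1, b2) r i \<omega> = (\<Prod>j\<in>{1..r}. visible_indicator b1 b2 i (right_steps \<omega> j i))"
proof -
  have "(if \<forall>j\<in>A. P j then 1 else 0 :: real) = (\<Prod>j\<in>A. if P j then 1 else 0)" if "finite A" for A P
    using that by (induction A rule: finite_induct) auto
  then show ?thesis
    unfolding Y_ind_def visible_indicator_def walk_pos_eq_right_steps by simp
qed

lemma card_row: "card {x\<in>{j} \<times> S. f x} = card {k\<in>S. f (j, k)}"
proof -
  have "{x\<in>{j} \<times> S. f x} = (\<lambda>k. (j, k)) ` {k\<in>S. f (j, k)}" by auto
  then show ?thesis by (simp add: card_image inj_on_def)
qed

text \<open>Between times \<open>i\<close> and \<open>k\<close> a walk takes \<open>k - i\<close> steps independent of its first \<open>i\<close>,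
  so its abscissae at these times are \<open>a\<close> and \<open>a + b\<close> with independent binomial \<open>a\<close>, \<open>b\<close>.\<close>

lemma expectation_right_steps_two_times:
  fixes \<phi> \<psi> :: "nat \<Rightarrow> real"
  assumes ik: "i \<le> k" and kn: "k \<le> n" and \<alpha>: "0 \<le> \<alpha> j" "\<alpha> j \<le> 1"
  shows "measure_pmf.expectation (Pi_pmf ({j} \<times> {..<n}) False (step_pmf \<alpha>))
      (\<lambda>f. \<phi> (right_steps f j i) * \<psi> (right_steps f j k)) =
    (\<Sum>a\<le>i. binom_weight i (\<alpha> j) a * \<phi> a * (\<Sum>b\<le>k - i. binom_weight (k - i) (\<alpha> j) b * \<psi> (a + b)))"
proof -
  define A where "A = {j} \<times> {..<i}"
  define B where "B = {j} \<times> {i..<k}"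
  have XA: "right_steps f j i = card {x\<in>A. f x}" for f
    unfolding right_steps_def A_def card_row by (intro arg_cong[where f = card]) auto
  have XB: "right_steps f j k = card {x\<in>A. f x} + card {x\<in>B. f x}" for f
  proof -
    have "right_steps f j k = card ({k'\<in>{..<i}. f (j, k')} \<union> {k'\<in>{i..<k}. f (j, k')})"
      unfolding right_steps_def using ik by (intro arg_cong[where f = card]) auto
    also have "\<dots> = card {k'\<in>{..<i}. f (j, k')} + card {k'\<in>{i..<k}. f (j, k')}"
      by (rule card_Un_disjoint) auto
    finally show ?thesis unfolding A_def B_def card_row .
  qed
  have U: "{j} \<times> {..<n} = (A \<union> B) \<union> ({j} \<times> {k..<n})" unfolding A_def B_def using ik kn by auto
  have "measure_pmf.expectation (Pi_pmf ({j} \<times> {..<n}) False (step_pmf \<alpha>))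
      (\<lambda>f. \<phi> (right_steps f j i) * \<psi> (right_steps f j k))
      = measure_pmf.expectation (Pi_pmf (A \<union> B) False (step_pmf \<alpha>))
      (\<lambda>f. \<phi> (right_steps f j i) * \<psi> (right_steps f j k))"
    unfolding U
  proof (rule expectation_Pi_pmf_union)
    show "finite (A \<union> B)" "finite ({j} \<times> {k..<n})" "(A \<union> B) \<inter> {j} \<times> {k..<n} = {}"
      unfolding A_def B_def using ik by auto
    fix f g :: "nat \<times> nat \<Rightarrow> bool" assume "\<forall>x\<in>A \<union> B. f x = g x"
    then have "right_steps f j i = right_steps g j i" "right_steps f j k = right_steps g j k"
      unfolding A_def B_def using ik by (auto intro!: right_steps_cong)
    then show "\<phi> (right_steps f j i) * \<psi> (right_steps f j k) = \<phi> (right_steps g j i) * \<psi> (right_steps g j k)"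
      by simp
  qed
  also have "\<dots> = measure_pmf.expectation (Pi_pmf (A \<union> B) False (step_pmf \<alpha>))
      (\<lambda>f. (\<lambda>a b. \<phi> a * \<psi> (a + b)) (card {x\<in>A. f x}) (card {x\<in>B. f x}))"
    by (simp add: XA XB)
  also have "\<dots> = (\<Sum>a\<le>card A. \<Sum>b\<le>card B. binom_weight (card A) (\<alpha> j) a * binom_weight (card B) (\<alpha> j) b
      * (\<phi> a * \<psi> (a + b)))"
    by (rule expectation_Pi_pmf_card_two_blocks) (auto simp: A_def B_def step_pmf_def \<alpha>)
  finally show ?thesis unfolding A_def B_def by (simp add: card_cartesian_product sum_distrib_left mult_ac)
qed

lemma expectation_walks_two_times:
  fixes \<phi> \<psi> :: "nat \<Rightarrow> real"
  assumes ik: "i \<le> k" and kn: "k \<le> n" and \<alpha>: "\<forall>j\<in>{1..r}. 0 \<le> \<alpha> j \<and> \<alpha> j \<le> 1"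
  shows "measure_pmf.expectation (walk_pmf r \<alpha> n)
      (\<lambda>f. \<Prod>j\<in>{1..r}. \<phi> (right_steps f j i) * \<psi> (right_steps f j k)) =
    (\<Prod>j\<in>{1..r}. \<Sum>a\<le>i. binom_weight i (\<alpha> j) a * \<phi> a *
      (\<Sum>b\<le>k - i. binom_weight (k - i) (\<alpha> j) b * \<psi> (a + b)))"
proof -
  have "right_steps f j i = right_steps g j i" "right_steps f j k = right_steps g j k"
    if "\<forall>c\<in>{..<n}. f (j, c) = g (j, c)" for f g j
    using that ik kn by (auto intro!: right_steps_cong)
  note dep = this
  have "measure_pmf.expectation (walk_pmf r \<alpha> n)
      (\<lambda>f. \<Prod>j\<in>{1..r}. \<phi> (right_steps f j i) * \<psi> (right_steps f j k)) =
    (\<Prod>j\<in>{1..r}. measure_pmf.expectation (Pi_pmf ({j} \<times> {..<n}) False (step_pmf \<alpha>))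
      (\<lambda>f. \<phi> (right_steps f j i) * \<psi> (right_steps f j k)))"
    unfolding walk_pmf_def
  proof (rule expectation_Pi_pmf_prod_rows)
    fix j and f g :: "nat \<times> nat \<Rightarrow> bool" assume "\<forall>c\<in>{..<n}. f (j, c) = g (j, c)"
    from dep[OF this] show "\<phi> (right_steps f j i) * \<psi> (right_steps f j k) =
        \<phi> (right_steps g j i) * \<psi> (right_steps g j k)"
      by simp
  qed auto
  then show ?thesis using \<alpha> by (simp add: expectation_right_steps_two_times[OF ik kn])
qed

lemma weighted_average_unit_interval:
  fixes wt h :: "nat \<Rightarrow> real"
  assumes "\<And>a. 0 \<le> wt a" "(\<Sum>a\<le>i. wt a) = 1" "\<And>a. 0 \<le> h a \<and> h a \<le> 1"
  shows "0 \<le> (\<Sum>a\<le>i. wt a * h a) \<and> (\<Sum>a\<le>i. wt a * h a) \<le> 1"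
proof
  show "0 \<le> (\<Sum>a\<le>i. wt a * h a)" using assms by (intro sum_nonneg) auto
  have "(\<Sum>a\<le>i. wt a * h a) \<le> (\<Sum>a\<le>i. wt a)" using assms by (intro sum_mono) (simp add: mult_left_le)
  then show "(\<Sum>a\<le>i. wt a * h a) \<le> 1" using assms by simp
qed

lemma weighted_covariance_le:
  fixes wt \<phi> g :: "nat \<Rightarrow> real"
  assumes wn: "\<And>a. 0 \<le> wt a" and ws: "(\<Sum>a\<le>i. wt a) = 1"
    and \<phi>: "\<And>a. 0 \<le> \<phi> a \<and> \<phi> a \<le> 1" and gc: "\<And>a. a \<le> i \<Longrightarrow> \<bar>g a - c\<bar> \<le> \<delta>"
  shows "\<bar>(\<Sum>a\<le>i. wt a * \<phi> a * g a) - (\<Sum>a\<le>i. wt a * \<phi> a) * (\<Sum>a\<le>i. wt a * g a)\<bar> \<le> 2 * \<delta>"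
proof -
  define E where "E = (\<Sum>a\<le>i. wt a * \<phi> a)"
  define D1 where "D1 = (\<Sum>a\<le>i. wt a * \<phi> a * (g a - c))"
  define D2 where "D2 = (\<Sum>a\<le>i. wt a * (g a - c))"
  have E: "0 \<le> E \<and> E \<le> 1" unfolding E_def by (rule weighted_average_unit_interval[OF wn ws \<phi>])
  have "\<bar>D1\<bar> \<le> (\<Sum>a\<le>i. \<bar>wt a * \<phi> a * (g a - c)\<bar>)" unfolding D1_def by (rule sum_abs)
  also have "\<dots> \<le> (\<Sum>a\<le>i. wt a * \<delta>)"
  proof (rule sum_mono)
    fix a assume "a \<in> {..i}"
    then have "\<phi> a * \<bar>g a - c\<bar> \<le> 1 * \<delta>" using \<phi>[of a] gc[of a] by (intro mult_mono) auto
    then show "\<bar>wt a * \<phi> a * (g a - c)\<bar> \<le> wt a * \<delta>"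
      using wn[of a] \<phi>[of a] by (simp add: abs_mult mult.assoc mult_left_mono)
  qed
  finally have D1: "\<bar>D1\<bar> \<le> \<delta>" using ws by (simp add: sum_distrib_right[symmetric])
  have "\<bar>D2\<bar> \<le> (\<Sum>a\<le>i. \<bar>wt a * (g a - c)\<bar>)" unfolding D2_def by (rule sum_abs)
  also have "\<dots> \<le> (\<Sum>a\<le>i. wt a * \<delta>)" using wn gc by (intro sum_mono) (simp add: abs_mult mult_left_mono)
  finally have D2: "\<bar>D2\<bar> \<le> \<delta>" using ws by (simp add: sum_distrib_right[symmetric])
  have "(\<Sum>a\<le>i. wt a * \<phi> a * g a) = c * E + D1"
    unfolding E_def D1_def by (simp add: sum_distrib_left algebra_simps sum.distrib[symmetric])
  moreover have "(\<Sum>a\<le>i. wt a * g a) = c * (\<Sum>a\<le>i. wt a) + D2"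
    unfolding D2_def by (simp add: algebra_simps sum.distrib sum_distrib_left sum_subtractf)
  moreover have "\<bar>E * D2\<bar> \<le> \<delta>" using E D2 mult_mono[of "\<bar>E\<bar>" 1 "\<bar>D2\<bar>" \<delta>] by (simp add: abs_mult)
  ultimately show ?thesis using D1 ws unfolding E_def[symmetric] by (simp add: algebra_simps)
qed

definition walk_cov :: "nat \<times> nat \<Rightarrow> nat \<Rightarrow> (nat \<Rightarrow> real) \<Rightarrow> nat \<Rightarrow> nat \<Rightarrow> nat \<Rightarrow> real" where
  "walk_cov b r \<alpha> n i k =
    measure_pmf.expectation (walk_pmf r \<alpha> n) (\<lambda>\<omega>. Y_ind b r i \<omega> * Y_ind b r k \<omega>)
    - measure_pmf.expectation (walk_pmf r \<alpha> n) (Y_ind b r i)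
      * measure_pmf.expectation (walk_pmf r \<alpha> n) (Y_ind b r k)"

lemma walk_cov_eq_prod_diff:
  fixes b1 b2 r :: nat and \<alpha> :: "nat \<Rightarrow> real"
  assumes ik: "i \<le> k" and kn: "k \<le> n" and \<alpha>: "\<forall>j\<in>{1..r}. 0 \<le> \<alpha> j \<and> \<alpha> j \<le> 1"
  defines "vi \<equiv> visible_indicator b1 b2 i" and "P j \<equiv> visible_prob_from b1 b2 k (k - i) (\<alpha> j)"
  shows "walk_cov (b1, b2) r \<alpha> n i k =
    (\<Prod>j\<in>{1..r}. \<Sum>x\<le>i. binom_weight i (\<alpha> j) x * vi x * P j x)
    - (\<Prod>j\<in>{1..r}. (\<Sum>x\<le>i. binom_weight i (\<alpha> j) x * vi x) * (\<Sum>x\<le>i. binom_weight i (\<alpha> j) x * P j x))"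
proof -
  define vk where "vk = visible_indicator b1 b2 k"
  have "measure_pmf.expectation (walk_pmf r \<alpha> n) (\<lambda>\<omega>. Y_ind (b1, b2) r i \<omega> * Y_ind (b1, b2) r k \<omega>)
      = (\<Prod>j\<in>{1..r}. \<Sum>x\<le>i. binom_weight i (\<alpha> j) x * vi x * P j x)"
    using expectation_walks_two_times[OF ik kn \<alpha>, of vi vk]
    unfolding Y_ind_eq_prod P_def visible_prob_from_def vi_def vk_def
    by (simp add: prod.distrib sum_distrib_left mult.assoc)
  moreover have "measure_pmf.expectation (walk_pmf r \<alpha> n) (Y_ind (b1, b2) r i)
      = (\<Prod>j\<in>{1..r}. \<Sum>x\<le>i. binom_weight i (\<alpha> j) x * vi x)"
    using expectation_walks_two_times[OF ik kn \<alpha>, of vi "\<lambda>_. 1"]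
    unfolding Y_ind_eq_prod vi_def by (simp add: sum_binom_weight)
  moreover have "measure_pmf.expectation (walk_pmf r \<alpha> n) (Y_ind (b1, b2) r k)
      = (\<Prod>j\<in>{1..r}. \<Sum>x\<le>i. binom_weight i (\<alpha> j) x * P j x)"
    using expectation_walks_two_times[OF ik kn \<alpha>, of "\<lambda>_. 1" vk]
    unfolding Y_ind_eq_prod P_def visible_prob_from_def vk_def by simp
  ultimately show ?thesis unfolding walk_cov_def by (simp add: prod.distrib)
qed

text \<open>Whatever the abscissa of walk \<open>j\<close> at time \<open>i\<close>, its probability of being visible at
  time \<open>k\<close> is within \<open>\<delta>\<close> of \<open>visible_density b1 b2 k\<close>; so each walk is almost uncorrelated
  with itself between times \<open>i\<close> and \<open>k\<close>, and the \<open>r\<close> independent walks add up.\<close>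

lemma walk_cov_le:
  fixes b1 b2 r :: nat and \<alpha> :: "nat \<Rightarrow> real"
  assumes b1: "b1 \<ge> 1" and b12: "b1 \<le> b2" and g: "coprime b1 b2"
    and \<alpha>: "\<forall>j\<in>{1..r}. 0 < \<alpha> j \<and> \<alpha> j < 1"
    and A0: "A0 > 0" "\<forall>j\<in>{1..r}. A0 \<le> \<alpha> j * (1 - \<alpha> j)"
    and ik: "i < k" and kn: "k \<le> n"
  shows "\<bar>walk_cov (b1, b2) r \<alpha> n i k\<bar>
    \<le> real r * (2 * ((2 ^ card (prime_power_divisors b1 k) + 1) * (8 / sqrt (A0 * real (k - i)))))"
proof -
  define m where "m = k - i"
  define \<delta> where "\<delta> = (2 ^ card (prime_power_divisors b1 k) + 1) * (8 / sqrt (A0 * real m))"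
  define vi where "vi = visible_indicator b1 b2 i"
  define G where "G j = visible_prob_from b1 b2 k m (\<alpha> j)" for j
  define Eik where "Eik j = (\<Sum>x\<le>i. binom_weight i (\<alpha> j) x * vi x * G j x)" for j
  define Ei where "Ei j = (\<Sum>x\<le>i. binom_weight i (\<alpha> j) x * vi x)" for j
  define Ek where "Ek j = (\<Sum>x\<le>i. binom_weight i (\<alpha> j) x * G j x)" for j
  have "\<forall>j\<in>{1..r}. 0 \<le> \<alpha> j \<and> \<alpha> j \<le> 1" using \<alpha> by auto
  then have cov: "walk_cov (b1, b2) r \<alpha> n i k = (\<Prod>j\<in>{1..r}. Eik j) - (\<Prod>j\<in>{1..r}. Ei j * Ek j)"
    using walk_cov_eq_prod_diff[of i k n r \<alpha> b1 b2] ik kn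
    unfolding Eik_def Ei_def Ek_def G_def vi_def m_def by simp
  have v01: "0 \<le> vi x \<and> vi x \<le> 1" "0 \<le> visible_indicator b1 b2 k x \<and> visible_indicator b1 b2 k x \<le> 1" for x
    by (simp_all add: vi_def visible_indicator_def)
  have "\<bar>Eik j - Ei j * Ek j\<bar> \<le> 2 * \<delta>" and "\<bar>Eik j\<bar> \<le> 1" and "\<bar>Ei j * Ek j\<bar> \<le> 1"
    if j: "j \<in> {1..r}" for j
  proof -
    have a: "0 < \<alpha> j" "\<alpha> j < 1" using \<alpha> j by auto
    have wn: "0 \<le> binom_weight l (\<alpha> j) b" for l b using a by (simp add: binom_weight_nonneg)
    have G01: "0 \<le> G j x \<and> G j x \<le> 1" for x
      unfolding G_def visible_prob_from_def
      using weighted_average_unit_interval[OF wn sum_binom_weight, of "\<lambda>b. visible_indicator b1 b2 k (x + b)"] v01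
      by simp
    have "\<bar>G j x - visible_density b1 b2 k\<bar>
        \<le> (2 ^ card (prime_power_divisors b1 k) + 1) * (8 / sqrt (\<alpha> j * (1 - \<alpha> j) * real m))" if "x \<le> i" for x
      unfolding G_def m_def using visible_prob_from_close[OF b1 b12 g a ik that] .
    also have "\<dots> \<le> \<delta>"
    proof -
      have "A0 * real m \<le> \<alpha> j * (1 - \<alpha> j) * real m" using A0 j by (intro mult_right_mono) auto
      moreover have "0 < A0 * real m" using A0 ik m_def by simp
      ultimately have "8 / sqrt (\<alpha> j * (1 - \<alpha> j) * real m) \<le> 8 / sqrt (A0 * real m)"
        by (intro divide_left_mono) auto
      then show ?thesis unfolding \<delta>_def by (intro mult_left_mono) auto
    qed
    finally show "\<bar>Eik j - Ei j * Ek j\<bar> \<le> 2 * \<delta>"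
      unfolding Eik_def Ei_def Ek_def using v01 by (intro weighted_covariance_le[OF wn sum_binom_weight]) auto
    have "0 \<le> Eik j \<and> Eik j \<le> 1"
      unfolding Eik_def using weighted_average_unit_interval[OF wn sum_binom_weight, of "\<lambda>a. vi a * G j a"]
        v01 G01 by (simp add: mult.assoc mult_le_one)
    then show "\<bar>Eik j\<bar> \<le> 1" by simp
    have "0 \<le> Ei j \<and> Ei j \<le> 1" "0 \<le> Ek j \<and> Ek j \<le> 1"
      unfolding Ei_def Ek_def using weighted_average_unit_interval[OF wn sum_binom_weight] v01 G01 by auto
    then show "\<bar>Ei j * Ek j\<bar> \<le> 1" by (simp add: abs_mult mult_le_one)
  qed
  note bounds = this
  have "\<bar>walk_cov (b1, b2) r \<alpha> n i k\<bar> \<le> (\<Sum>j\<in>{1..r}. \<bar>Eik j - Ei j * Ek j\<bar>)"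
    unfolding cov using norm_prod_diff[of "{1..r}" Eik "\<lambda>j. Ei j * Ek j"] bounds(2,3) by simp
  also have "\<dots> \<le> (\<Sum>j\<in>{1..r}. 2 * \<delta>)" using bounds(1) by (intro sum_mono)
  finally show ?thesis by (simp add: \<delta>_def m_def)
qed

lemma variance_average_finite_pmf:
  fixes Y :: "nat \<Rightarrow> 'a \<Rightarrow> real"
  assumes fin: "finite (set_pmf P)"
  shows "measure_pmf.expectation P (\<lambda>x. ((1 / real n) * (\<Sum>i=1..n. Y i x) -
      measure_pmf.expectation P (\<lambda>x. (1 / real n) * (\<Sum>i=1..n. Y i x)))\<^sup>2)
    = (1 / real n)\<^sup>2 * (\<Sum>i=1..n. \<Sum>k=1..n. measure_pmf.expectation P (\<lambda>x. Y i x * Y k x)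
      - measure_pmf.expectation P (Y i) * measure_pmf.expectation P (Y k))"
proof -
  define S where "S = set_pmf P"
  define \<pi> where "\<pi> = pmf P"
  define c where "c = 1 / real n"
  define R where "R x = c * (\<Sum>i=1..n. Y i x)" for x
  define \<mu> where "\<mu> = (\<Sum>x\<in>S. R x * \<pi> x)"
  have E: "measure_pmf.expectation P F = (\<Sum>x\<in>S. F x * \<pi> x)" for F :: "'a \<Rightarrow> real"
    unfolding S_def \<pi>_def by (rule expectation_finite_pmf[OF fin])
  have s1: "(\<Sum>x\<in>S. \<pi> x) = 1" unfolding S_def \<pi>_def using fin by (intro sum_pmf_eq_1) auto
  have "(\<Sum>x\<in>S. (R x - \<mu>)\<^sup>2 * \<pi> x) = (\<Sum>x\<in>S. R x * R x * \<pi> x - 2 * \<mu> * (R x * \<pi> x) + \<mu> * \<mu> * \<pi> x)"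
    by (intro sum.cong refl) (simp add: power2_eq_square algebra_simps)
  also have "\<dots> = (\<Sum>x\<in>S. R x * R x * \<pi> x) - \<mu> * \<mu>"
    using s1 unfolding \<mu>_def by (simp add: sum.distrib sum_subtractf sum_distrib_left[symmetric])
  also have "(\<Sum>x\<in>S. R x * R x * \<pi> x) = c\<^sup>2 * (\<Sum>i=1..n. \<Sum>k=1..n. \<Sum>x\<in>S. Y i x * Y k x * \<pi> x)"
  proof -
    have "R x * R x * \<pi> x = c\<^sup>2 * (\<Sum>i=1..n. \<Sum>k=1..n. Y i x * Y k x * \<pi> x)" for x
    proof -
      have "(\<Sum>i=1..n. Y i x) * (\<Sum>k=1..n. Y k x) = (\<Sum>i=1..n. \<Sum>k=1..n. Y i x * Y k x)"
        by (rule sum_product)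
      then have "(\<Sum>i=1..n. Y i x) * (\<Sum>k=1..n. Y k x) * \<pi> x = (\<Sum>i=1..n. \<Sum>k=1..n. Y i x * Y k x * \<pi> x)"
        by (simp add: sum_distrib_right)
      then show ?thesis unfolding R_def by (simp add: power2_eq_square mult.assoc mult.left_commute)
    qed
    then have "(\<Sum>x\<in>S. R x * R x * \<pi> x) = c\<^sup>2 * (\<Sum>x\<in>S. \<Sum>i=1..n. \<Sum>k=1..n. Y i x * Y k x * \<pi> x)"
      by (simp add: sum_distrib_left)
    also have "\<dots> = c\<^sup>2 * (\<Sum>i=1..n. \<Sum>k=1..n. \<Sum>x\<in>S. Y i x * Y k x * \<pi> x)"
      by (subst sum.swap) (simp add: sum.swap[of _ S])
    finally show ?thesis .
  qed
  also have "\<mu> * \<mu> = c\<^sup>2 * (\<Sum>i=1..n. \<Sum>k=1..n. (\<Sum>x\<in>S. Y i x * \<pi> x) * (\<Sum>x\<in>S. Y k x * \<pi> x))"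
  proof -
    have "\<mu> = c * (\<Sum>i=1..n. \<Sum>x\<in>S. Y i x * \<pi> x)"
      unfolding \<mu>_def R_def by (simp add: sum_distrib_left sum_distrib_right sum.swap[of _ S] algebra_simps)
    then show ?thesis by (simp add: power2_eq_square sum_product algebra_simps)
  qed
  finally have "(\<Sum>x\<in>S. (R x - \<mu>)\<^sup>2 * \<pi> x) = c\<^sup>2 * (\<Sum>i=1..n. \<Sum>k=1..n.
      (\<Sum>x\<in>S. Y i x * Y k x * \<pi> x) - (\<Sum>x\<in>S. Y i x * \<pi> x) * (\<Sum>x\<in>S. Y k x * \<pi> x))"
    by (simp add: sum_subtractf right_diff_distrib)
  then show ?thesis unfolding E c_def[symmetric] R_def[symmetric, unfolded c_def[symmetric]]
    unfolding \<mu>_def by (simp add: R_def)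
qed

lemma variance_Rbar_eq_sum_walk_cov:
  "prob_space.variance (walk_space r \<alpha>) (Rbar b r n) =
    (1 / real n)\<^sup>2 * (\<Sum>i=1..n. \<Sum>k=1..n. walk_cov b r \<alpha> n i k)"
proof -
  define J where "J = {1..r} \<times> {..<n}"
  have WS: "walk_space r \<alpha> = PiM ({1..r} \<times> UNIV) (\<lambda>x. measure_pmf (step_pmf \<alpha> x))"
    unfolding walk_space_def step_pmf_def by simp
  have "Rbar b r n f = Rbar b r n g" if "\<forall>x\<in>J. f x = g x" for f g
  proof -
    obtain b1 b2 where b: "b = (b1, b2)" by (cases b)
    have "Y_ind b r i f = Y_ind b r i g" if "i \<in> {1..n}" for i
      unfolding b Y_ind_eq_prod using that \<open>\<forall>x\<in>J. f x = g x\<close> unfolding J_def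
      by (intro prod.cong refl arg_cong[where f = "visible_indicator b1 b2 i"] right_steps_cong) auto
    then show ?thesis unfolding Rbar_def by simp
  qed
  note dep = this
  have int_eq: "integral\<^sup>L (walk_space r \<alpha>) (\<lambda>x. h (Rbar b r n x))
      = measure_pmf.expectation (walk_pmf r \<alpha> n) (\<lambda>x. h (Rbar b r n x))" for h :: "real \<Rightarrow> real"
    unfolding WS walk_pmf_def J_def[symmetric]
  proof (rule integral_PiM_eq_expectation_Pi_pmf)
    fix f g :: "nat \<times> nat \<Rightarrow> bool" assume "\<forall>x\<in>J. f x = g x"
    from dep[OF this] show "h (Rbar b r n f) = h (Rbar b r n g)" by simp
  qed (auto simp: J_def)
  have "prob_space.variance (walk_space r \<alpha>) (Rbar b r n) =
      measure_pmf.expectation (walk_pmf r \<alpha> n)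
        (\<lambda>x. (Rbar b r n x - measure_pmf.expectation (walk_pmf r \<alpha> n) (Rbar b r n))\<^sup>2)"
    using int_eq[of "\<lambda>y. y"] int_eq[of "\<lambda>y. (y - measure_pmf.expectation (walk_pmf r \<alpha> n) (Rbar b r n))\<^sup>2"]
    by simp
  also have "\<dots> = (1 / real n)\<^sup>2 * (\<Sum>i=1..n. \<Sum>k=1..n. walk_cov b r \<alpha> n i k)"
    unfolding walk_cov_def Rbar_def walk_pmf_def
    by (rule variance_average_finite_pmf[OF finite_set_Pi_pmf_bool]) simp
  finally show ?thesis .
qed

lemma abs_walk_cov_le_1: "\<bar>walk_cov b r \<alpha> n i k\<bar> \<le> 1"
proof -
  have fin: "finite (set_pmf (walk_pmf r \<alpha> n))"
    unfolding walk_pmf_def by (simp add: finite_set_Pi_pmf_bool)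
  have "0 \<le> measure_pmf.expectation (walk_pmf r \<alpha> n) F \<and> measure_pmf.expectation (walk_pmf r \<alpha> n) F \<le> 1"
    if "\<And>x. 0 \<le> F x \<and> F x \<le> 1" for F :: "(nat \<times> nat \<Rightarrow> bool) \<Rightarrow> real"
  proof -
    have "(\<Sum>x\<in>set_pmf (walk_pmf r \<alpha> n). F x * pmf (walk_pmf r \<alpha> n) x) \<le> (\<Sum>x\<in>set_pmf (walk_pmf r \<alpha> n). pmf (walk_pmf r \<alpha> n) x)"
      using that by (intro sum_mono) (simp add: mult_left_le_one_le)
    also have "\<dots> = 1" using fin by (intro sum_pmf_eq_1) auto
    finally show ?thesis using that by (auto simp: expectation_finite_pmf[OF fin] intro!: sum_nonneg)
  qed
  moreover have "0 \<le> Y_ind b r i x \<and> Y_ind b r i x \<le> 1" for i x by (simp add: Y_ind_def)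
  ultimately show ?thesis unfolding walk_cov_def by (smt (verit) mult_le_one mult_nonneg_nonneg)
qed

lemma sum_inverse_sqrt_le: "(\<Sum>d=1..N. 1 / sqrt (real d)) \<le> 2 * sqrt (real N)"
proof (induction N)
  case (Suc N)
  define s where "s = sqrt (real (Suc N))"
  define t where "t = sqrt (real N)"
  have "s * s - t * t = 1" "0 \<le> (s - t)\<^sup>2" unfolding s_def t_def by simp_all
  then have "1 \<le> 2 * (s - t) * s" by (simp add: power2_eq_square algebra_simps)
  then have "1 / s \<le> 2 * (s - t)" unfolding s_def by (simp add: field_simps)
  then show ?case using Suc unfolding s_def t_def by simp
qed simp

lemma double_sum_symmetric:
  fixes c :: "nat \<Rightarrow> nat \<Rightarrow> real"
  assumes fS: "finite S" and sym: "\<And>i k. c i k = c k i"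
  shows "(\<Sum>i\<in>S. \<Sum>k\<in>S. c i k) = (\<Sum>i\<in>S. c i i) + 2 * (\<Sum>i\<in>S. \<Sum>k\<in>S. if i < k then c i k else 0)"
proof -
  have split: "c i k = (if i < k then c i k else 0) + (if i = k then c i k else 0) + (if k < i then c i k else 0)"
    for i k by auto
  have "(\<Sum>i\<in>S. \<Sum>k\<in>S. c i k) = (\<Sum>i\<in>S. \<Sum>k\<in>S. if i < k then c i k else 0)
      + (\<Sum>i\<in>S. \<Sum>k\<in>S. if i = k then c i k else 0) + (\<Sum>i\<in>S. \<Sum>k\<in>S. if k < i then c i k else 0)"
    by (subst split) (simp add: sum.distrib)
  also have "(\<Sum>i\<in>S. \<Sum>k\<in>S. if i = k then c i k else 0) = (\<Sum>i\<in>S. c i i)"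
    using fS by (intro sum.cong refl) (simp add: sum.delta)
  also have "(\<Sum>i\<in>S. \<Sum>k\<in>S. if k < i then c i k else 0) = (\<Sum>k\<in>S. \<Sum>i\<in>S. if k < i then c i k else 0)"
    by (rule sum.swap)
  also have "\<dots> = (\<Sum>i\<in>S. \<Sum>k\<in>S. if i < k then c i k else 0)"
    by (intro sum.cong refl) (metis sym)
  finally show ?thesis by simp
qed

lemma double_sum_le_sqrt_decay:
  fixes c :: "nat \<Rightarrow> nat \<Rightarrow> real"
  assumes sym: "\<And>i k. c i k = c k i" and diag: "\<And>i. \<bar>c i i\<bar> \<le> 1"
    and off: "\<And>i k. 1 \<le> i \<Longrightarrow> i < k \<Longrightarrow> k \<le> n \<Longrightarrow> \<bar>c i k\<bar> \<le> Q / sqrt (real (k - i))"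
    and Q: "Q \<ge> 0"
  shows "\<bar>\<Sum>i=1..n. \<Sum>k=1..n. c i k\<bar> \<le> real n + 4 * Q * real n * sqrt (real n)"
proof -
  have diagonal: "\<bar>\<Sum>i=1..n. c i i\<bar> \<le> (\<Sum>i=1..n. 1)" using diag by (intro order_trans[OF sum_abs] sum_mono)
  have row: "\<bar>\<Sum>k=1..n. if i < k then c i k else 0\<bar> \<le> 2 * Q * sqrt (real n)" if i: "i \<in> {1..n}" for i
  proof -
    have "\<bar>\<Sum>k=1..n. if i < k then c i k else 0\<bar> \<le> (\<Sum>k=1..n. if i < k then Q / sqrt (real (k - i)) else 0)"
      using off i by (intro order_trans[OF sum_abs] sum_mono) auto
    also have "\<dots> = (\<Sum>k\<in>{1..n} \<inter> {k. i < k}. Q / sqrt (real (k - i)))"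
      by (subst sum.inter_restrict) simp_all
    also have "{1..n} \<inter> {k. i < k} = {1 + i..(n - i) + i}" using i by auto
    also have "(\<Sum>k\<in>{1 + i..(n - i) + i}. Q / sqrt (real (k - i))) = Q * (\<Sum>d=1..n - i. 1 / sqrt (real d))"
      by (subst sum.shift_bounds_cl_nat_ivl) (simp add: sum_distrib_left)
    also have "\<dots> \<le> Q * (2 * sqrt (real n))"
    proof (rule mult_left_mono)
      show "(\<Sum>d=1..n - i. 1 / sqrt (real d)) \<le> 2 * sqrt (real n)"
      proof -
        have "sqrt (real (n - i)) \<le> sqrt (real n)" by simp
        then show ?thesis using sum_inverse_sqrt_le[of "n - i"] by linarith
      qed
    qed (rule Q)
    finally show ?thesis by simp
  qed
  have "\<bar>\<Sum>i=1..n. \<Sum>k=1..n. if i < k then c i k else 0\<bar> \<le> (\<Sum>i=1..n. 2 * Q * sqrt (real n))"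
    by (rule order_trans[OF sum_abs sum_mono]) (rule row)
  with diagonal show ?thesis
    unfolding double_sum_symmetric[OF finite_atLeastAtMost sym] by (simp add: algebra_simps)
qed

lemma walk_cov_uniform_bound:
  fixes b1 b2 r :: nat and \<alpha> :: "nat \<Rightarrow> real" and \<epsilon> :: real
  assumes b1: "b1 \<ge> 1" and b12: "b1 \<le> b2" and g: "coprime b1 b2" and r: "r \<ge> 1"
    and \<alpha>: "\<forall>j\<in>{1..r}. 0 < \<alpha> j \<and> \<alpha> j < 1" and e: "\<epsilon> > 0"
  obtains K where "K \<ge> 0"
    "\<And>n i k. 1 \<le> i \<Longrightarrow> i < k \<Longrightarrow> k \<le> n \<Longrightarrow>
      \<bar>walk_cov (b1, b2) r \<alpha> n i k\<bar> \<le> K * real n powr \<epsilon> / sqrt (real (k - i))"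
proof -
  obtain C where C: "C > 0" "\<And>k::nat. k \<ge> 1 \<Longrightarrow> 2 ^ card (prime_factors k) \<le> C * real k powr \<epsilon>"
    using two_pow_card_prime_factors_le[OF e] by blast
  define A0 where "A0 = Min ((\<lambda>j. \<alpha> j * (1 - \<alpha> j)) ` {1..r})"
  have A0: "A0 > 0" "\<forall>j\<in>{1..r}. A0 \<le> \<alpha> j * (1 - \<alpha> j)"
    unfolding A0_def using r \<alpha> by (auto simp: Min_gr_iff)
  show ?thesis
  proof
    show "0 \<le> real r * 16 * (C + 1) / sqrt A0" using C A0 by simp
    fix n i k :: nat assume ik: "1 \<le> i" "i < k" "k \<le> n"
    have "card (prime_power_divisors b1 k) \<le> card (prime_factors k)"
      using prime_power_divisors_subset[of k b1] ik b1 by (intro card_mono) auto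
    then have "(2::real) ^ card (prime_power_divisors b1 k) \<le> 2 ^ card (prime_factors k)"
      by (intro power_increasing) auto
    also have "\<dots> \<le> C * real k powr \<epsilon>" using C ik by simp
    also have "\<dots> \<le> C * real n powr \<epsilon>" using ik C e by (intro mult_left_mono powr_mono2) auto
    finally have "(2::real) ^ card (prime_power_divisors b1 k) + 1 \<le> (C + 1) * real n powr \<epsilon>"
      using ge_one_powr_ge_zero[of "real n" \<epsilon>] ik e by (simp add: algebra_simps)
    then have "real r * (2 * ((2 ^ card (prime_power_divisors b1 k) + 1) * (8 / sqrt (A0 * real (k - i)))))
        \<le> real r * (2 * (((C + 1) * real n powr \<epsilon>) * (8 / sqrt (A0 * real (k - i)))))"
      using A0 by (intro mult_left_mono mult_right_mono) auto
    also have "\<dots> = real r * 16 * (C + 1) / sqrt A0 * real n powr \<epsilon> / sqrt (real (k - i))"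
      by (simp add: real_sqrt_mult)
    finally show "\<bar>walk_cov (b1, b2) r \<alpha> n i k\<bar> \<le> real r * 16 * (C + 1) / sqrt A0 * real n powr \<epsilon> / sqrt (real (k - i))"
      using walk_cov_le[OF b1 b12 g \<alpha> A0 ik(2,3)] by linarith
  qed
qed

lemma variance_bound_powr:
  fixes n :: nat and \<epsilon> K :: real
  assumes n: "n \<ge> 1" and e: "\<epsilon> > 0" and K: "K \<ge> 0"
  shows "(1 / real n)\<^sup>2 * (real n + 4 * (K * real n powr \<epsilon>) * real n * sqrt (real n))
    \<le> (1 + 4 * K) * real n powr (-1/2 + \<epsilon>)"
proof -
  have n0: "real n > 0" using n by simp
  have "1 / real n = real n powr (-1)" using n0 by (simp add: powr_minus_divide)
  also have "\<dots> \<le> real n powr (-1/2 + \<epsilon>)" using n e by (intro powr_mono) auto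
  finally have t1: "1 / real n \<le> real n powr (-1/2 + \<epsilon>)" .
  have "real n powr (-1/2) = real n powr (1/2 - 1)" by simp
  also have "\<dots> = real n powr (1/2) / real n powr 1" by (rule powr_diff)
  also have "\<dots> = sqrt (real n) / real n" using n0 by (simp add: powr_half_sqrt)
  finally have sq: "real n powr (-1/2) = sqrt (real n) / real n" .
  have "real n powr \<epsilon> * real n powr (-1/2) = real n powr (-1/2 + \<epsilon>)"
    using n0 by (simp add: powr_add[symmetric] algebra_simps)
  then have "real n powr \<epsilon> * (sqrt (real n) / real n) = real n powr (-1/2 + \<epsilon>)"
    unfolding sq .
  then have "(1 / real n)\<^sup>2 * (real n + 4 * (K * real n powr \<epsilon>) * real n * sqrt (real n))
      = 1 / real n + 4 * K * real n powr (-1/2 + \<epsilon>)"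
    using n0 by (simp add: power2_eq_square field_simps)
  then show ?thesis using t1 by (simp add: algebra_simps)
qed

theorem proposition4p2:
  fixes b1 b2 r :: nat and \<alpha> :: "nat \<Rightarrow> real" and \<epsilon> :: real
  assumes "b1 \<ge> 1" and "gcd b1 b2 = 1" and "b1 \<le> b2"
    and "r \<ge> 1"
    and "\<forall>j\<in>{1..r}. 0 < \<alpha> j \<and> \<alpha> j < 1"
    and "\<epsilon> > 0"
  shows "(\<lambda>n. prob_space.variance (walk_space r \<alpha>) (Rbar (b1, b2) r n))
           \<in> O(\<lambda>n. real n powr (-1/2 + \<epsilon>))"
proof -
  have "coprime b1 b2" using assms(2) by (simp add: coprime_iff_gcd_eq_1)
  then obtain K where K: "K \<ge> 0" and cov_bound:
    "\<And>n i k. 1 \<le> i \<Longrightarrow> i < k \<Longrightarrow> k \<le> n \<Longrightarrow>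
      \<bar>walk_cov (b1, b2) r \<alpha> n i k\<bar> \<le> K * real n powr \<epsilon> / sqrt (real (k - i))"
    using walk_cov_uniform_bound assms(1,3-6) by metis
  have "\<bar>prob_space.variance (walk_space r \<alpha>) (Rbar (b1, b2) r n)\<bar> \<le> (1 + 4 * K) * real n powr (-1/2 + \<epsilon>)"
    if n: "n \<ge> 1" for n
  proof -
    have "\<bar>\<Sum>i=1..n. \<Sum>k=1..n. walk_cov (b1, b2) r \<alpha> n i k\<bar>
        \<le> real n + 4 * (K * real n powr \<epsilon>) * real n * sqrt (real n)"
      using K by (intro double_sum_le_sqrt_decay abs_walk_cov_le_1 cov_bound)
        (auto simp: walk_cov_def mult.commute)
    then show ?thesis
      unfolding variance_Rbar_eq_sum_walk_cov using variance_bound_powr[OF n assms(6) K]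
      by (simp add: abs_mult) (meson mult_left_mono order_trans zero_le_power2)
  qed
  then show ?thesis
    by (intro bigoI[where c = "1 + 4 * K"] eventually_mono[OF eventually_ge_at_top[of 1]]) auto
qed

end
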